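(* Let $b>\frac12$. There is $C>0$ such that for every bounded interval $I\subset\mathbb{R}$ and all $u,v\in X^{0,b}$, \[ \|I_x^{1/2}I_{x,-}^{1/2}(P_{y,I}u,v)\|_{L^2_{t,x,y}}+\|I_x^{1/2}I_{x,-}^{1/2}(u,P_{y,I}v)\|_{L^2_{t,x,y}}+\|P_{y,I}I_x^{1/2}I_{x,-}^{1/2}(u,v)\|_{L^2_{t,x,y}}\le C|I|^{1/2}\|u\|_{0,b}\|v\|_{0,b}, \] where $|I|$ is the length of $I$. The same estimates hold with the roles of $x$ and $y$ (and of $\xi$ and $\eta$) interchanged.
   Context: Notation: $\langle a\rangle=(1+|a|^2)^{1/2}$; $(\tau,\xi,\eta)$ are the Fourier variables dual to $(t,x,y)$, $\widehat u$ is the space-time Fourier transform. $X^{s,b}$ is the space of tempered distributions $u$ on $\mathbb{R}\times\mathbb{R}^2$ with $\widehat u\in L^2_{loc}$ and $\|u\|_{s,b}=\|\langle\tau-\xi^3-\eta^3\rangle^b\langle(\xi,\eta)\rangle^s\widehat u\|_{L^2_{\tau\xi\eta}}<\infty$. $I_x^{1/2}$ is the Fourier multiplier with symbol $|\xi|^{1/2}$; $P_{y,I}$ is the Fourier multiplier with symbol $\chi_{\{\eta\in I\}}$. $I_{x,-}^{1/2}$ is the bilinear operator acting in the space variables by $\mathcal F_{x,y}(I_{x,-}^{1/2}(f_1,f_2))(\xi,\eta)=\int_{\xi_1+\xi_2=\xi,\ \eta_1+\eta_2=\eta}|\xi_1-\xi_2|^{1/2}\widehat{f_1}(\xi_1,\eta_1)\widehat{f_2}(\xi_2,\eta_2)\,d\xi_1d\eta_1$.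 With $x,y$ interchanged, $I_y^{1/2}$ has symbol $|\eta|^{1/2}$, $I_{y,-}^{1/2}$ has symbol $|\eta_1-\eta_2|^{1/2}$ and $P_{x,I}$ has symbol $\chi_{\{\xi\in I\}}$. *)

theory Defs
  imports "HOL-Analysis.Analysis"
begin

text \<open>All objects are described on the Fourier side: a space-time function u is
represented by its space-time Fourier transform f = u-hat, a function of
zeta = (tau, xi, eta) :: real * real * real.  By Plancherel, L2 norms in
(t,x,y) coincide (up to a fixed normalising constant) with L2 norms in
(tau,xi,eta); products in (t,x,y) become convolutions.\<close>

definition jb :: "real \<Rightarrow> real" where
  "jb a = sqrt (1 + a\<^sup>2)"

definition jb2 :: "real \<Rightarrow> real \<Rightarrow> real" where
  "jb2 \<xi> \<eta> = sqrt (1 + \<xi>\<^sup>2 + \<eta>\<^sup>2)"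

definition Xsb_weight :: "real \<Rightarrow> real \<Rightarrow> real \<times> real \<times> real \<Rightarrow> real" where
  "Xsb_weight s b \<zeta> = (case \<zeta> of (\<tau>, \<xi>, \<eta>) \<Rightarrow>
      jb (\<tau> - \<xi>^3 - \<eta>^3) powr b * jb2 \<xi> \<eta> powr s)"

definition Xsb_sq :: "real \<Rightarrow> real \<Rightarrow> (real \<times> real \<times> real \<Rightarrow> complex) \<Rightarrow> ennreal" where
  "Xsb_sq s b f = (\<integral>\<^sup>+ \<zeta>. ennreal ((Xsb_weight s b \<zeta> * cmod (f \<zeta>))\<^sup>2) \<partial>lborel)"

definition in_Xsb :: "real \<Rightarrow> real \<Rightarrow> (real \<times> real \<times> real \<Rightarrow> complex) \<Rightarrow> bool" where
  "in_Xsb s b f \<longleftrightarrow> f \<in> borel_measurable lborel \<and> Xsb_sq s b f < \<infinity>"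

definition Xsb_norm :: "real \<Rightarrow> real \<Rightarrow> (real \<times> real \<times> real \<Rightarrow> complex) \<Rightarrow> real" where
  "Xsb_norm s b f = sqrt (enn2real (Xsb_sq s b f))"

definition l2sq :: "(real \<times> real \<times> real \<Rightarrow> complex) \<Rightarrow> ennreal" where
  "l2sq h = (\<integral>\<^sup>+ \<zeta>. ennreal ((cmod (h \<zeta>))\<^sup>2) \<partial>lborel)"

definition l2norm :: "(real \<times> real \<times> real \<Rightarrow> complex) \<Rightarrow> real" where
  "l2norm h = sqrt (enn2real (l2sq h))"

definition Py_hat :: "real set \<Rightarrow> (real \<times> real \<times> real \<Rightarrow> complex) \<Rightarrow> real \<times> real \<times> real \<Rightarrow> complex" where
  "Py_hat I f \<zeta> = (case \<zeta> of (\<tau>, \<xi>, \<eta>) \<Rightarrow> if \<eta> \<in> I then f \<zeta> else 0)"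

definition Px_hat :: "real set \<Rightarrow> (real \<times> real \<times> real \<Rightarrow> complex) \<Rightarrow> real \<times> real \<times> real \<Rightarrow> complex" where
  "Px_hat I f \<zeta> = (case \<zeta> of (\<tau>, \<xi>, \<eta>) \<Rightarrow> if \<xi> \<in> I then f \<zeta> else 0)"

text \<open>Fourier side of I_x^{1/2} I_{x,-}^{1/2}(u,v): at zeta = (tau,xi,eta) it is
  |xi|^{1/2} * integral over zeta1 = (tau1,xi1,eta1) of
  |xi1 - xi2|^{1/2} f(zeta1) g(zeta - zeta1),  with xi2 = xi - xi1.\<close>
definition bilx_integrand ::
  "(real \<times> real \<times> real \<Rightarrow> complex) \<Rightarrow> (real \<times> real \<times> real \<Rightarrow> complex) \<Rightarrow>
   real \<times> real \<times> real \<Rightarrow> real \<times> real \<times> real \<Rightarrow> complex" where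
  "bilx_integrand f g \<zeta> \<zeta>1 =
     complex_of_real (\<bar>fst (snd \<zeta>1) - (fst (snd \<zeta>) - fst (snd \<zeta>1))\<bar> powr (1/2))
       * f \<zeta>1 * g (\<zeta> - \<zeta>1)"

definition bilx_hat ::
  "(real \<times> real \<times> real \<Rightarrow> complex) \<Rightarrow> (real \<times> real \<times> real \<Rightarrow> complex) \<Rightarrow>
   real \<times> real \<times> real \<Rightarrow> complex" where
  "bilx_hat f g \<zeta> = complex_of_real (\<bar>fst (snd \<zeta>)\<bar> powr (1/2))
       * (\<integral> \<zeta>1. bilx_integrand f g \<zeta> \<zeta>1 \<partial>lborel)"

definition bilx_defined ::
  "(real \<times> real \<times> real \<Rightarrow> complex) \<Rightarrow> (real \<times> real \<times> real \<Rightarrow> complex) \<Rightarrow> bool" where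
  "bilx_defined f g \<longleftrightarrow> (AE \<zeta> in lborel. integrable lborel (bilx_integrand f g \<zeta>))"

definition bily_integrand ::
  "(real \<times> real \<times> real \<Rightarrow> complex) \<Rightarrow> (real \<times> real \<times> real \<Rightarrow> complex) \<Rightarrow>
   real \<times> real \<times> real \<Rightarrow> real \<times> real \<times> real \<Rightarrow> complex" where
  "bily_integrand f g \<zeta> \<zeta>1 =
     complex_of_real (\<bar>snd (snd \<zeta>1) - (snd (snd \<zeta>) - snd (snd \<zeta>1))\<bar> powr (1/2))
       * f \<zeta>1 * g (\<zeta> - \<zeta>1)"

definition bily_hat ::
  "(real \<times> real \<times> real \<Rightarrow> complex) \<Rightarrow> (real \<times> real \<times> real \<Rightarrow> complex) \<Rightarrow>
   real \<times> real \<times> real \<Rightarrow> complex" where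
  "bily_hat f g \<zeta> = complex_of_real (\<bar>snd (snd \<zeta>)\<bar> powr (1/2))
       * (\<integral> \<zeta>1. bily_integrand f g \<zeta> \<zeta>1 \<partial>lborel)"

definition bily_defined ::
  "(real \<times> real \<times> real \<Rightarrow> complex) \<Rightarrow> (real \<times> real \<times> real \<Rightarrow> complex) \<Rightarrow> bool" where
  "bily_defined f g \<longleftrightarrow> (AE \<zeta> in lborel. integrable lborel (bily_integrand f g \<zeta>))"

definition bounded_interval :: "real set \<Rightarrow> real \<Rightarrow> real \<Rightarrow> bool" where
  "bounded_interval I a c \<longleftrightarrow> a \<le> c \<and> {a<..<c} \<subseteq> I \<and> I \<subseteq> {a..c}"

end

theory Submission
  imports Defs "HOL-Analysis.Analysis"
begin

text \<open>On the Fourier side the bilinear operator is a convolution with weight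
  \<open>|\<xi>|^(1/2) |\<xi>1 - \<xi>2|^(1/2)\<close>. Freezing the \<open>\<eta>\<close>-frequencies of both factors and applying
  Cauchy--Schwarz in \<open>(\<tau>1, \<xi>1)\<close> reduces everything to the resonance bound
  \<open>|\<xi>| \<integral>\<integral> |\<xi>1 - \<xi>2| \<langle>\<tau>1 - \<xi>1^3 - c1\<rangle>^(-2b) \<langle>\<tau> - \<tau>1 - \<xi>2^3 - c2\<rangle>^(-2b) d\<tau>1 d\<xi>1 \<le> C\<close>,
  uniformly in \<open>\<tau>, \<xi>, c1, c2\<close>. Since \<open>2b > 1\<close>, the \<open>\<tau>1\<close>-integral is a multiple of
  \<open>\<langle>\<tau> - c1 - c2 - \<xi>1^3 - \<xi>2^3\<rangle>^(-2b)\<close>, and because \<open>\<xi>1^3 + \<xi>2^3 = \<xi>^3/4 + 3\<xi>(\<xi>1 - \<xi>/2)^2\<close>,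
  the substitution \<open>\<mu> = 3|\<xi>|(\<xi>1 - \<xi>/2)^2\<close> absorbs the weight \<open>|\<xi>| |\<xi>1 - \<xi>2|\<close>.
  By Minkowski's inequality the output at frequency \<open>\<eta>\<close> is then bounded by the \<open>\<eta>\<close>-convolution
  of the weighted \<open>L^2(\<tau>, \<xi>)\<close>-norms of the slices of \<open>u\<close> and \<open>v\<close>; restricting \<open>u\<close>, \<open>v\<close> or the
  output to \<open>\<eta> \<in> I\<close> costs \<open>|I|^(1/2)\<close> by Cauchy--Schwarz over \<open>I\<close>. The estimate in \<open>y\<close> is
  the estimate in \<open>x\<close> for \<open>u\<close> and \<open>v\<close> with \<open>\<xi>\<close> and \<open>\<eta>\<close> exchanged.\<close>

section \<open>Integrals of the Japanese bracket\<close>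

lemma jb_ge_1: "jb s \<ge> 1"
  unfolding jb_def by (simp add: real_sqrt_ge_one)

lemma jb_pos: "jb s > 0"
  using jb_ge_1[of s] by linarith

lemma jb_ge_abs: "jb s \<ge> \<bar>s\<bar>"
  unfolding jb_def by (metis real_sqrt_abs real_sqrt_le_mono add_le_cancel_right le_add_same_cancel2 zero_le_one)

lemma borel_measurable_jb[measurable]: "jb \<in> borel_measurable borel"
  unfolding jb_def by measurable

lemma nn_integral_powr_tail:
  assumes "\<beta> > 1"
  shows "(\<integral>\<^sup>+s. ennreal (s powr (-\<beta>)) * indicator {1..} s \<partial>lborel) = ennreal (1 / (\<beta> - 1))"
proof -
  have "(\<integral>\<^sup>+s. ennreal (s powr (-\<beta>)) * indicator {1..} s \<partial>lborel) = 0 - (- (1 powr (1-\<beta>)) / (\<beta> - 1))"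
  proof (rule nn_integral_FTC_atLeast[where F="\<lambda>s. - (s powr (1-\<beta>)) / (\<beta> - 1)" and T=0])
    show "(\<lambda>s. s powr (-\<beta>)) \<in> borel_measurable borel" by measurable
    fix x :: real assume x: "1 \<le> x"
    show "0 \<le> x powr (-\<beta>)" by simp
    have "((\<lambda>s. s powr (1 - \<beta>)) has_real_derivative (1-\<beta>) * x powr (1 - \<beta> - 1)) (at x)"
      using x by (intro has_real_derivative_powr) auto
    then have "((\<lambda>s. - (s powr (1-\<beta>)) / (\<beta> - 1)) has_real_derivative - ((1-\<beta>) * x powr (1 - \<beta> - 1)) / (\<beta> - 1)) (at x)"
      by (intro DERIV_cdivide DERIV_minus)
    moreover have "- ((1-\<beta>) * x powr (1 - \<beta> - 1)) / (\<beta> - 1) = x powr (-\<beta>)"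
      using assms by (simp add: field_simps)
    ultimately show "((\<lambda>s. - (s powr (1-\<beta>)) / (\<beta> - 1)) has_real_derivative x powr (-\<beta>)) (at x)" by simp
  next
    have "((\<lambda>s::real. s powr (1-\<beta>)) \<longlongrightarrow> 0) at_top"
      using assms by (intro tendsto_neg_powr filterlim_ident) auto
    then have "((\<lambda>s::real. - (s powr (1-\<beta>)) / (\<beta> - 1)) \<longlongrightarrow> - 0 / (\<beta> - 1)) at_top"
      by (intro tendsto_divide tendsto_minus) (use assms in auto)
    then show "((\<lambda>s::real. - (s powr (1-\<beta>)) / (\<beta> - 1)) \<longlongrightarrow> 0) at_top" by simp
  qed
  then show ?thesis by simp
qed

lemma nn_integral_lborel_reflect:
  fixes h :: "real \<Rightarrow> ennreal"
  assumes [measurable]: "h \<in> borel_measurable borel"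
  shows "(\<integral>\<^sup>+s. h (c - s) \<partial>lborel) = (\<integral>\<^sup>+s. h s \<partial>lborel)"
  using nn_integral_real_affine[of h "-1" c] by simp

lemma nn_integral_lborel_translate:
  fixes h :: "real \<Rightarrow> ennreal"
  assumes [measurable]: "h \<in> borel_measurable borel"
  shows "(\<integral>\<^sup>+s. h (s + c) \<partial>lborel) = (\<integral>\<^sup>+s. h s \<partial>lborel)"
  using nn_integral_real_affine[of h "1" c] by (simp add: add.commute)

definition bracket_integral :: "real \<Rightarrow> ennreal" where
  "bracket_integral \<beta> = (\<integral>\<^sup>+s. ennreal (jb s powr (-\<beta>)) \<partial>lborel)"

lemma bracket_integral_finite:
  assumes "\<beta> > 1"
  shows "bracket_integral \<beta> < \<infinity>"
proof -
  let ?t = "\<lambda>s::real. ennreal (s powr (-\<beta>)) * indicator {1..} s"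
  have [measurable]: "(\<lambda>s. ?t s) \<in> borel_measurable borel" "(\<lambda>s. ?t (0 - s)) \<in> borel_measurable borel"
    by measurable
  have le: "ennreal (jb s powr (-\<beta>)) \<le> indicator {-1..1} s + ?t s + ?t (0 - s)" for s
  proof -
    consider "\<bar>s\<bar> \<le> 1" | "s > 1" | "-s > 1" by linarith
    then show ?thesis
    proof cases
      case 1
      then have "ennreal (jb s powr (-\<beta>)) \<le> indicator {-1..1} s"
        using jb_ge_1[of s] assms by (auto simp: indicator_def powr_minus_divide ge_one_powr_ge_zero)
      then show ?thesis by (rule order_trans) (simp add: add.assoc add_increasing2)
    next
      case 2
      have "jb s powr (-\<beta>) \<le> s powr (-\<beta>)"
        using 2 jb_ge_abs[of s] assms by (intro powr_mono2') auto
      then have "ennreal (jb s powr (-\<beta>)) \<le> ?t s" using 2 by (auto simp: indicator_def)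
      then show ?thesis by (rule order_trans) (simp add: add_increasing add_increasing2)
    next
      case 3
      have "jb s powr (-\<beta>) \<le> (-s) powr (-\<beta>)"
        using 3 jb_ge_abs[of s] assms by (intro powr_mono2') auto
      then have "ennreal (jb s powr (-\<beta>)) \<le> ?t (0 - s)" using 3 by (auto simp: indicator_def)
      then show ?thesis by (rule order_trans) (simp add: add_increasing)
    qed
  qed
  have "bracket_integral \<beta> \<le> (\<integral>\<^sup>+s. indicator {-1..1} s + ?t s + ?t (0 - s) \<partial>lborel)"
    unfolding bracket_integral_def by (intro nn_integral_mono le)
  also have "\<dots> = (\<integral>\<^sup>+s. indicator {-1..1::real} s \<partial>lborel) + (\<integral>\<^sup>+s. ?t s \<partial>lborel) + (\<integral>\<^sup>+s. ?t (0 - s) \<partial>lborel)"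
    by (simp add: nn_integral_add del: ennreal_plus)
  also have "(\<integral>\<^sup>+s. ?t (0 - s) \<partial>lborel) = (\<integral>\<^sup>+s. ?t s \<partial>lborel)"
    by (rule nn_integral_lborel_reflect) measurable
  also have "(\<integral>\<^sup>+s. ?t s \<partial>lborel) = ennreal (1 / (\<beta> - 1))"
    using nn_integral_powr_tail[OF assms] .
  also have "(\<integral>\<^sup>+s. indicator {-1..1::real} s \<partial>lborel) = ennreal 2" by simp
  finally have "bracket_integral \<beta> \<le> ennreal 2 + ennreal (1 / (\<beta> - 1)) + ennreal (1 / (\<beta> - 1))" .
  then show ?thesis
    by (rule le_less_trans) (simp add: less_top[symmetric])
qed

lemma jb_powr_neg_le_of_abs_le:
  assumes "\<bar>r\<bar> \<le> 2 * \<bar>s\<bar>" "\<beta> \<ge> 0"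
  shows "jb s powr (-\<beta>) \<le> 2 powr \<beta> * jb r powr (-\<beta>)"
proof -
  have "r\<^sup>2 \<le> (2 * \<bar>s\<bar>)\<^sup>2"
    using assms(1) power_mono[of "\<bar>r\<bar>" "2 * \<bar>s\<bar>" 2] by simp
  then have "1 + r\<^sup>2 \<le> (2 * jb s)\<^sup>2" unfolding jb_def by (simp add: power_mult_distrib)
  then have "jb r \<le> sqrt ((2 * jb s)\<^sup>2)" unfolding jb_def[of r] by (rule real_sqrt_le_mono)
  also have "\<dots> = 2 * jb s" using jb_pos[of s] by (simp add: real_sqrt_mult)
  finally have "jb s powr (-\<beta>) \<le> (jb r / 2) powr (-\<beta>)"
    using assms(2) jb_pos[of r] by (intro powr_mono2') auto
  also have "\<dots> = 2 powr \<beta> * jb r powr (-\<beta>)"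
    using jb_pos[of r] by (simp add: powr_divide powr_minus divide_simps)
  finally show ?thesis .
qed

text \<open>One of s, u carries at least half of s + u.\<close>
lemma jb_powr_neg_product_le:
  assumes "\<beta> \<ge> 0"
  shows "jb s powr (-\<beta>) * jb u powr (-\<beta>) \<le> 2 powr \<beta> * jb (s + u) powr (-\<beta>) * (jb s powr (-\<beta>) + jb u powr (-\<beta>))"
proof (cases "\<bar>s + u\<bar> \<le> 2 * \<bar>s\<bar>")
  case True
  have "jb s powr (-\<beta>) * jb u powr (-\<beta>) \<le> (2 powr \<beta> * jb (s+u) powr (-\<beta>)) * jb u powr (-\<beta>)"
    by (intro mult_right_mono jb_powr_neg_le_of_abs_le True assms) auto
  also have "\<dots> \<le> 2 powr \<beta> * jb (s + u) powr (-\<beta>) * (jb s powr (-\<beta>) + jb u powr (-\<beta>))"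
    by (intro mult_left_mono) auto
  finally show ?thesis .
next
  case False
  then have "\<bar>s + u\<bar> \<le> 2 * \<bar>u\<bar>" by linarith
  then have "jb s powr (-\<beta>) * jb u powr (-\<beta>) \<le> jb s powr (-\<beta>) * (2 powr \<beta> * jb (s+u) powr (-\<beta>))"
    by (intro mult_left_mono jb_powr_neg_le_of_abs_le assms) auto
  also have "\<dots> \<le> 2 powr \<beta> * jb (s + u) powr (-\<beta>) * (jb s powr (-\<beta>) + jb u powr (-\<beta>))"
    by (simp add: algebra_simps)
  finally show ?thesis .
qed

lemma nn_integral_jb_convolution_le:
  assumes "\<beta> \<ge> 0"
  shows "(\<integral>\<^sup>+t. ennreal (jb (t - p) powr (-\<beta>) * jb (q - t) powr (-\<beta>)) \<partial>lborel)
     \<le> ennreal (2 * 2 powr \<beta>) * bracket_integral \<beta> * ennreal (jb (q - p) powr (-\<beta>))"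
proof -
  let ?K = "2 powr \<beta> * jb (q - p) powr (-\<beta>)"
  have "(\<integral>\<^sup>+t. ennreal (jb (t - p) powr (-\<beta>) * jb (q - t) powr (-\<beta>)) \<partial>lborel)
      \<le> (\<integral>\<^sup>+t. ennreal ?K * ennreal (jb (t - p) powr (-\<beta>)) + ennreal ?K * ennreal (jb (q - t) powr (-\<beta>)) \<partial>lborel)"
  proof (intro nn_integral_mono)
    fix t
    have "jb (t - p) powr (-\<beta>) * jb (q - t) powr (-\<beta>) \<le> ?K * (jb (t - p) powr (-\<beta>) + jb (q - t) powr (-\<beta>))"
      using jb_powr_neg_product_le[OF assms, of "t - p" "q - t"] by simp
    then have "ennreal (jb (t - p) powr (-\<beta>) * jb (q - t) powr (-\<beta>)) \<le> ennreal (?K * jb (t - p) powr (-\<beta>) + ?K * jb (q - t) powr (-\<beta>))"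
      by (intro ennreal_leI) (simp add: distrib_left)
    also have "\<dots> = ennreal ?K * ennreal (jb (t - p) powr (-\<beta>)) + ennreal ?K * ennreal (jb (q - t) powr (-\<beta>))"
      by (subst ennreal_plus) (auto simp: ennreal_mult)
    finally show "ennreal (jb (t - p) powr (-\<beta>) * jb (q - t) powr (-\<beta>)) \<le> ennreal ?K * ennreal (jb (t - p) powr (-\<beta>)) + ennreal ?K * ennreal (jb (q - t) powr (-\<beta>))" .
  qed
  also have "\<dots> = ennreal ?K * (\<integral>\<^sup>+t. ennreal (jb (t - p) powr (-\<beta>)) \<partial>lborel) + ennreal ?K * (\<integral>\<^sup>+t. ennreal (jb (q - t) powr (-\<beta>)) \<partial>lborel)"
    by (subst nn_integral_add) (auto simp: nn_integral_cmult)
  also have "(\<integral>\<^sup>+t. ennreal (jb (t - p) powr (-\<beta>)) \<partial>lborel) = bracket_integral \<beta>"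
    unfolding bracket_integral_def using nn_integral_lborel_translate[of "\<lambda>s. ennreal (jb s powr (-\<beta>))" "-p"] by simp
  also have "(\<integral>\<^sup>+t. ennreal (jb (q - t) powr (-\<beta>)) \<partial>lborel) = bracket_integral \<beta>"
    unfolding bracket_integral_def using nn_integral_lborel_reflect[of "\<lambda>s. ennreal (jb s powr (-\<beta>))" q] by simp
  also have "ennreal ?K * bracket_integral \<beta> + ennreal ?K * bracket_integral \<beta> = ennreal (2 * 2 powr \<beta>) * bracket_integral \<beta> * ennreal (jb (q - p) powr (-\<beta>))"
  proof -
    have e1: "ennreal ?K = ennreal (2 powr \<beta>) * ennreal (jb (q - p) powr (-\<beta>))" by (simp add: ennreal_mult)
    have e2: "ennreal (2 * 2 powr \<beta>) = 2 * ennreal (2 powr \<beta>)" by (simp add: ennreal_mult)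
    show ?thesis unfolding e1 e2 by (simp add: mult_2 algebra_simps)
  qed
  finally show ?thesis .
qed

section \<open>The resonance integral\<close>

lemma nn_integral_halfline_le:
  fixes f :: "real \<Rightarrow> ennreal"
  assumes [measurable]: "f \<in> borel_measurable borel"
  assumes le: "\<And>n::nat. (\<integral>\<^sup>+x. f x * indicator {0..real n} x \<partial>lborel) \<le> C"
  shows "(\<integral>\<^sup>+x. f x * indicator {0..} x \<partial>lborel) \<le> C"
proof -
  have pw: "(SUP n. f x * indicator {0..real n} x) = f x * indicator {0..} x" for x
  proof (cases "x \<ge> 0")
    case True
    have "f x * indicator {0..} x \<le> (SUP n. f x * indicator {0..real n} x)"
    proof (rule SUP_upper2[of "nat \<lceil>x\<rceil>"])
      show "f x * indicator {0..} x \<le> f x * indicator {0..real (nat \<lceil>x\<rceil>)} x"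
        using True real_nat_ceiling_ge[of x] by (auto simp: indicator_def)
    qed simp
    moreover have "(SUP n. f x * indicator {0..real n} x) \<le> f x * indicator {0..} x"
      by (rule SUP_least) (auto simp: indicator_def)
    ultimately show ?thesis by (rule antisym[rotated])
  next
    case False
    then show ?thesis by (simp add: indicator_def)
  qed
  have "(\<integral>\<^sup>+x. f x * indicator {0..} x \<partial>lborel) = (\<integral>\<^sup>+x. (SUP n. f x * indicator {0..real n} x) \<partial>lborel)"
    by (simp add: pw)
  also have "\<dots> = (SUP n. \<integral>\<^sup>+x. f x * indicator {0..real n} x \<partial>lborel)"
  proof (rule nn_integral_monotone_convergence_SUP)
    show "incseq (\<lambda>n x. f x * indicator {0..real n} x)"
      by (auto simp: incseq_def le_fun_def indicator_def intro!: mult_left_mono)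
  qed measurable
  also have "\<dots> \<le> C" by (rule SUP_least) (rule le)
  finally show ?thesis .
qed

lemma bracket_integral_affine:
  assumes "\<sigma> = 1 \<or> \<sigma> = -1"
  shows "(\<integral>\<^sup>+\<mu>. ennreal (jb (T - \<sigma> * \<mu>) powr (-\<beta>)) \<partial>lborel) = bracket_integral \<beta>"
proof -
  have "bracket_integral \<beta> = ennreal \<bar>- \<sigma>\<bar> * (\<integral>\<^sup>+x. ennreal (jb (T + (- \<sigma>) * x) powr (-\<beta>)) \<partial>lborel)"
    unfolding bracket_integral_def using assms
    by (intro nn_integral_real_affine[of "\<lambda>s. ennreal (jb s powr (-\<beta>))"]) (auto, measurable)
  then show ?thesis using assms by auto
qed

text \<open>The substitution \<open>\<mu> = 3 a v\<^sup>2\<close>, applied on each \<open>[0, n]\<close>.\<close>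
lemma nn_integral_jb_quadratic_le:
  assumes a: "a > 0" and s: "\<sigma> = 1 \<or> \<sigma> = -1"
  shows "(\<integral>\<^sup>+v. ennreal (jb (T - \<sigma> * (3 * a * v\<^sup>2)) powr (-\<beta>) * (6 * a * v)) * indicator {0..} v \<partial>lborel)
    \<le> bracket_integral \<beta>"
proof (rule nn_integral_halfline_le)
  fix n :: nat
  let ?f = "\<lambda>\<mu>. jb (T - \<sigma> * \<mu>) powr (-\<beta>)"
  let ?g = "\<lambda>v::real. 3 * a * v\<^sup>2"
  have "(\<integral>\<^sup>+v. ennreal (?f (?g v) * (6 * a * v)) * indicator {0..real n} v \<partial>lborel)
      = (\<integral>\<^sup>+v. ennreal (?f (?g v) * (6 * a * v) * indicator {0..real n} v) \<partial>lborel)"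
    by (intro nn_integral_cong) (auto simp: indicator_def)
  also have "\<dots> = (\<integral>\<^sup>+x. ennreal (?f x * indicator {?g 0..?g (real n)} x) \<partial>lborel)"
  proof (rule nn_integral_substitution[symmetric])
    show "set_borel_measurable borel {?g 0..?g (real n)} ?f"
      unfolding set_borel_measurable_def by measurable
    fix x :: real
    show "(?g has_real_derivative 6 * a * x) (at x)"
      by (auto intro!: derivative_eq_intros)
    assume "x \<in> {0..real n}"
    then show "0 \<le> 6 * a * x" using a by auto
  next
    show "continuous_on {0..real n} (\<lambda>x. 6 * a * x)" by (intro continuous_intros)
  qed simp
  also have "\<dots> \<le> (\<integral>\<^sup>+x. ennreal (?f x) \<partial>lborel)"
    by (intro nn_integral_mono ennreal_leI) (auto simp: indicator_def)
  also have "\<dots> = bracket_integral \<beta>" using bracket_integral_affine[OF s] .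
  finally show "(\<integral>\<^sup>+v. ennreal (?f (?g v) * (6 * a * v)) * indicator {0..real n} v \<partial>lborel) \<le> bracket_integral \<beta>" .
qed measurable

lemma cube_sum_centered:
  "(v + \<xi>/2)^3 + (\<xi> - (v + \<xi>/2))^3 = (\<xi>::real)^3/4 + sgn \<xi> * (3 * \<bar>\<xi>\<bar> * v\<^sup>2)"
proof -
  have "(v + \<xi>/2)^3 + (\<xi> - (v + \<xi>/2))^3 = \<xi>^3/4 + 3 * \<xi> * v\<^sup>2"
    by (simp add: power3_eq_cube power2_eq_square field_simps)
  then show ?thesis by (simp add: sgn_mult_abs)
qed

lemma nn_integral_centered_resonance_le:
  assumes a: "a > 0" and s: "\<sigma> = 1 \<or> \<sigma> = -1"
  shows "(\<integral>\<^sup>+v. ennreal (a * (2 * \<bar>v\<bar>) * jb (T - \<sigma> * (3 * a * v\<^sup>2)) powr (-\<beta>)) \<partial>lborel) \<le> 2 * bracket_integral \<beta>"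
proof -
  let ?H = "\<lambda>v. jb (T - \<sigma> * (3 * a * v\<^sup>2)) powr (-\<beta>)"
  let ?\<psi> = "\<lambda>v. ennreal (?H v * (6 * a * v) * indicator {0..} v)"
  have \<psi>_le: "(\<integral>\<^sup>+v. ?\<psi> v \<partial>lborel) \<le> bracket_integral \<beta>"
  proof -
    have "(\<integral>\<^sup>+v. ?\<psi> v \<partial>lborel) = (\<integral>\<^sup>+v. ennreal (?H v * (6 * a * v)) * indicator {0..} v \<partial>lborel)"
      by (intro nn_integral_cong) (auto simp: indicator_def)
    also have "\<dots> \<le> bracket_integral \<beta>"
      by (rule nn_integral_jb_quadratic_le[OF a s])
    finally show ?thesis .
  qed
  have "(\<integral>\<^sup>+v. ennreal (a * (2 * \<bar>v\<bar>) * ?H v) \<partial>lborel) \<le> (\<integral>\<^sup>+v. ?\<psi> v + ?\<psi> (0 - v) \<partial>lborel)"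
  proof (intro nn_integral_mono)
    fix v :: real
    show "ennreal (a * (2 * \<bar>v\<bar>) * ?H v) \<le> ?\<psi> v + ?\<psi> (0 - v)"
    proof (cases "v \<ge> 0")
      case True
      have "ennreal (a * (2 * \<bar>v\<bar>) * ?H v) \<le> ?\<psi> v"
        using True a by (intro ennreal_leI) (auto simp: indicator_def mult_ac intro!: mult_right_mono)
      then show ?thesis by (simp add: add_increasing2)
    next
      case False
      have "ennreal (a * (2 * \<bar>v\<bar>) * ?H v) \<le> ?\<psi> (0 - v)"
        using False a by (intro ennreal_leI) (auto simp: indicator_def mult_ac intro!: mult_right_mono)
      then show ?thesis by (simp add: add_increasing)
    qed
  qed
  also have "\<dots> = (\<integral>\<^sup>+v. ?\<psi> v \<partial>lborel) + (\<integral>\<^sup>+v. ?\<psi> (0 - v) \<partial>lborel)"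
    by (rule nn_integral_add) measurable
  also have "(\<integral>\<^sup>+v. ?\<psi> (0 - v) \<partial>lborel) = (\<integral>\<^sup>+v. ?\<psi> v \<partial>lborel)"
    by (rule nn_integral_lborel_reflect) measurable
  also have "(\<integral>\<^sup>+v. ?\<psi> v \<partial>lborel) + (\<integral>\<^sup>+v. ?\<psi> v \<partial>lborel) \<le> bracket_integral \<beta> + bracket_integral \<beta>"
    by (intro add_mono \<psi>_le)
  finally show ?thesis unfolding mult_2 .
qed

text \<open>After centring \<open>x = v + \<xi>/2\<close>, the weight \<open>|\<xi>| |x - (\<xi> - x)| = 2 |\<xi>| |v|\<close> is dominated by the
  Jacobian of \<open>\<mu> = 3 |\<xi>| v\<^sup>2\<close>, which linearises the phase \<open>x\<^sup>3 + (\<xi> - x)\<^sup>3\<close>.\<close>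

lemma resonance_integral_le:
  "(\<integral>\<^sup>+x. ennreal (\<bar>\<xi>\<bar> * \<bar>x - (\<xi> - x)\<bar> * jb (T - x^3 - (\<xi> - x)^3) powr (-\<beta>)) \<partial>lborel) \<le> 2 * bracket_integral \<beta>"
proof (cases "\<xi> = 0")
  case True
  then show ?thesis by (simp only: True abs_zero mult_zero_left ennreal_0 nn_integral_const mult_zero_left zero_le)
next
  case False
  have "(\<integral>\<^sup>+x. ennreal (\<bar>\<xi>\<bar> * \<bar>x - (\<xi> - x)\<bar> * jb (T - x^3 - (\<xi> - x)^3) powr (-\<beta>)) \<partial>lborel)
      = (\<integral>\<^sup>+v. ennreal (\<bar>\<xi>\<bar> * \<bar>(v + \<xi>/2) - (\<xi> - (v + \<xi>/2))\<bar> * jb (T - (v + \<xi>/2)^3 - (\<xi> - (v + \<xi>/2))^3) powr (-\<beta>)) \<partial>lborel)"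
    by (rule nn_integral_lborel_translate[symmetric]) measurable
  also have "\<dots> = (\<integral>\<^sup>+v. ennreal (\<bar>\<xi>\<bar> * (2 * \<bar>v\<bar>) * jb ((T - \<xi>^3/4) - sgn \<xi> * (3 * \<bar>\<xi>\<bar> * v\<^sup>2)) powr (-\<beta>)) \<partial>lborel)"
  proof (intro nn_integral_cong)
    fix v :: real
    have "T - (v + \<xi>/2)^3 - (\<xi> - (v + \<xi>/2))^3 = (T - \<xi>^3/4) - sgn \<xi> * (3 * \<bar>\<xi>\<bar> * v\<^sup>2)"
      using cube_sum_centered[of v \<xi>] by linarith
    moreover have "\<bar>(v + \<xi>/2) - (\<xi> - (v + \<xi>/2))\<bar> = 2 * \<bar>v\<bar>" by simp
    ultimately show "ennreal (\<bar>\<xi>\<bar> * \<bar>(v + \<xi>/2) - (\<xi> - (v + \<xi>/2))\<bar> * jb (T - (v + \<xi>/2)^3 - (\<xi> - (v + \<xi>/2))^3) powr (-\<beta>))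
      = ennreal (\<bar>\<xi>\<bar> * (2 * \<bar>v\<bar>) * jb ((T - \<xi>^3/4) - sgn \<xi> * (3 * \<bar>\<xi>\<bar> * v\<^sup>2)) powr (-\<beta>))"
      by (simp only:)
  qed
  also have "\<dots> \<le> 2 * bracket_integral \<beta>"
    by (rule nn_integral_centered_resonance_le) (use False in \<open>auto simp: sgn_if\<close>)
  finally show ?thesis .
qed

abbreviation lborel2 :: "(real \<times> real) measure" where
  "lborel2 \<equiv> lborel \<Otimes>\<^sub>M lborel"

abbreviation lborel3 :: "(real \<times> real \<times> real) measure" where
  "lborel3 \<equiv> lborel \<Otimes>\<^sub>M lborel2"

lemma nn_integral_lborel2_snd:
  assumes "f \<in> borel_measurable lborel2"
  shows "(\<integral>\<^sup>+p. f p \<partial>lborel2) = (\<integral>\<^sup>+y. \<integral>\<^sup>+x. f (x, y) \<partial>lborel \<partial>lborel)"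
  using lborel_pair.nn_integral_snd[OF assms] by simp

lemma nn_integral_lborel2_fst:
  assumes "f \<in> borel_measurable lborel2"
  shows "(\<integral>\<^sup>+p. f p \<partial>lborel2) = (\<integral>\<^sup>+x. \<integral>\<^sup>+y. f (x, y) \<partial>lborel \<partial>lborel)"
  using lborel.nn_integral_fst[OF assms] by simp

definition resonance_constant :: "real \<Rightarrow> ennreal" where
  "resonance_constant \<beta> = ennreal (2 * 2 powr \<beta>) * bracket_integral \<beta> * (2 * bracket_integral \<beta>)"

lemma resonance_constant_finite:
  assumes "\<beta> > 1"
  shows "resonance_constant \<beta> < \<infinity>"
  using bracket_integral_finite[OF assms] unfolding resonance_constant_def
  by (auto simp: ennreal_mult_less_top)

lemma resonance_double_integral_le:
  assumes "\<beta> \<ge> 0"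
  shows "(\<integral>\<^sup>+p. ennreal (\<bar>\<xi>\<bar> * \<bar>snd p - (\<xi> - snd p)\<bar> *
            (jb (fst p - snd p ^ 3 - c1) powr (-\<beta>) * jb (\<tau> - fst p - (\<xi> - snd p) ^ 3 - c2) powr (-\<beta>))) \<partial>lborel2)
         \<le> resonance_constant \<beta>"
proof -
  let ?K = "ennreal (2 * 2 powr \<beta>) * bracket_integral \<beta>"
  let ?A = "\<lambda>x. \<bar>\<xi>\<bar> * \<bar>x - (\<xi> - x)\<bar>"
  have "(\<integral>\<^sup>+p. ennreal (?A (snd p) *
            (jb (fst p - snd p ^ 3 - c1) powr (-\<beta>) * jb (\<tau> - fst p - (\<xi> - snd p) ^ 3 - c2) powr (-\<beta>))) \<partial>lborel2)
      = (\<integral>\<^sup>+x. \<integral>\<^sup>+t. ennreal (?A x *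
            (jb (t - x ^ 3 - c1) powr (-\<beta>) * jb (\<tau> - t - (\<xi> - x) ^ 3 - c2) powr (-\<beta>))) \<partial>lborel \<partial>lborel)"
    by (subst nn_integral_lborel2_snd) (simp, measurable)
  also have "\<dots> \<le> (\<integral>\<^sup>+x. ?K * ennreal (?A x * jb ((\<tau> - c1 - c2) - x ^ 3 - (\<xi> - x) ^ 3) powr (-\<beta>)) \<partial>lborel)"
  proof (intro nn_integral_mono)
    fix x
    have "(\<integral>\<^sup>+t. ennreal (?A x * (jb (t - x ^ 3 - c1) powr (-\<beta>) * jb (\<tau> - t - (\<xi> - x) ^ 3 - c2) powr (-\<beta>))) \<partial>lborel)
       = ennreal (?A x) * (\<integral>\<^sup>+t. ennreal (jb (t - (x ^ 3 + c1)) powr (-\<beta>) * jb ((\<tau> - (\<xi> - x) ^ 3 - c2) - t) powr (-\<beta>)) \<partial>lborel)"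
      by (subst nn_integral_cmult[symmetric]) (auto simp: ennreal_mult[symmetric] algebra_simps)
    also have "\<dots> \<le> ennreal (?A x) * (?K * ennreal (jb ((\<tau> - (\<xi> - x) ^ 3 - c2) - (x ^ 3 + c1)) powr (-\<beta>)))"
      by (intro mult_left_mono nn_integral_jb_convolution_le assms) auto
    also have "\<dots> = ?K * ennreal (?A x * jb ((\<tau> - c1 - c2) - x ^ 3 - (\<xi> - x) ^ 3) powr (-\<beta>))"
      by (simp add: ennreal_mult algebra_simps)
    finally show "(\<integral>\<^sup>+t. ennreal (?A x * (jb (t - x ^ 3 - c1) powr (-\<beta>) * jb (\<tau> - t - (\<xi> - x) ^ 3 - c2) powr (-\<beta>))) \<partial>lborel)
       \<le> ?K * ennreal (?A x * jb ((\<tau> - c1 - c2) - x ^ 3 - (\<xi> - x) ^ 3) powr (-\<beta>))" .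
  qed
  also have "\<dots> = ?K * (\<integral>\<^sup>+x. ennreal (?A x * jb ((\<tau> - c1 - c2) - x ^ 3 - (\<xi> - x) ^ 3) powr (-\<beta>)) \<partial>lborel)"
    by (rule nn_integral_cmult) measurable
  also have "\<dots> \<le> ?K * (2 * bracket_integral \<beta>)"
    by (intro mult_left_mono resonance_integral_le[of \<xi> "\<tau> - c1 - c2" \<beta>]) simp
  finally show ?thesis unfolding resonance_constant_def .
qed

lemma ennreal_mult_power2:
  assumes "0 \<le> c" "0 \<le> x"
  shows "ennreal c * (ennreal x)\<^sup>2 = ennreal (c * x\<^sup>2)"
  using assms by (simp add: ennreal_mult ennreal_power)

lemma nn_integral_resonance_weight_sq_le:
  assumes b: "b \<ge> 0"
  shows "ennreal \<bar>\<xi>\<bar> * (\<integral>\<^sup>+p. (ennreal (\<bar>snd p - (\<xi> - snd p)\<bar> powr (1/2)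
      * (jb (fst p - snd p ^ 3 - c1) powr (-b) * jb (\<tau> - fst p - (\<xi> - snd p) ^ 3 - c2) powr (-b))))\<^sup>2 \<partial>lborel2)
    \<le> resonance_constant (2 * b)"
proof -
  have "ennreal \<bar>\<xi>\<bar> * (\<integral>\<^sup>+p. (ennreal (\<bar>snd p - (\<xi> - snd p)\<bar> powr (1/2)
      * (jb (fst p - snd p ^ 3 - c1) powr (-b) * jb (\<tau> - fst p - (\<xi> - snd p) ^ 3 - c2) powr (-b))))\<^sup>2 \<partial>lborel2)
    = (\<integral>\<^sup>+p. ennreal (\<bar>\<xi>\<bar> * \<bar>snd p - (\<xi> - snd p)\<bar> *
      (jb (fst p - snd p ^ 3 - c1) powr (-(2 * b)) * jb (\<tau> - fst p - (\<xi> - snd p) ^ 3 - c2) powr (-(2 * b)))) \<partial>lborel2)"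
  proof (subst nn_integral_cmult[symmetric], measurable, intro nn_integral_cong)
    fix p :: "real \<times> real"
    have "(\<bar>snd p - (\<xi> - snd p)\<bar> powr (1/2)
        * (jb (fst p - snd p ^ 3 - c1) powr (-b) * jb (\<tau> - fst p - (\<xi> - snd p) ^ 3 - c2) powr (-b)))\<^sup>2
      = \<bar>snd p - (\<xi> - snd p)\<bar>
        * (jb (fst p - snd p ^ 3 - c1) powr (-(2*b)) * jb (\<tau> - fst p - (\<xi> - snd p) ^ 3 - c2) powr (-(2*b)))"
      using jb_pos[of "fst p - snd p ^ 3 - c1"] jb_pos[of "\<tau> - fst p - (\<xi> - snd p) ^ 3 - c2"]
      by (simp add: power_mult_distrib powr_powr[symmetric] powr_realpow[symmetric] powr_powr mult_ac powr_half_sqrt)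
    then show "ennreal \<bar>\<xi>\<bar> * (ennreal (\<bar>snd p - (\<xi> - snd p)\<bar> powr (1/2)
        * (jb (fst p - snd p ^ 3 - c1) powr (-b) * jb (\<tau> - fst p - (\<xi> - snd p) ^ 3 - c2) powr (-b))))\<^sup>2
      = ennreal (\<bar>\<xi>\<bar> * \<bar>snd p - (\<xi> - snd p)\<bar> *
        (jb (fst p - snd p ^ 3 - c1) powr (-(2 * b)) * jb (\<tau> - fst p - (\<xi> - snd p) ^ 3 - c2) powr (-(2 * b))))"
      by (subst ennreal_mult_power2) (auto simp: mult.assoc)
  qed
  also have "\<dots> \<le> resonance_constant (2 * b)"
    by (rule resonance_double_integral_le) (use b in simp)
  finally show ?thesis .
qed

definition ennreal_sqrt :: "ennreal \<Rightarrow> ennreal" where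
  "ennreal_sqrt x = (if x = top then top else ennreal (sqrt (enn2real x)))"

lemma borel_measurable_ennreal_sqrt[measurable]: "ennreal_sqrt \<in> borel_measurable borel"
  unfolding ennreal_sqrt_def by measurable

lemma power2_ennreal_sqrt[simp]: "(ennreal_sqrt x)\<^sup>2 = x"
proof (cases x)
  case (real r)
  then have "(ennreal (sqrt r))\<^sup>2 = ennreal ((sqrt r)\<^sup>2)" by (simp add: ennreal_power)
  also have "\<dots> = ennreal r" using real by simp
  finally show ?thesis using real by (simp add: ennreal_sqrt_def)
qed (simp add: ennreal_sqrt_def)

lemma power2_le_imp_le_ennreal:
  fixes x y :: ennreal
  assumes "x\<^sup>2 \<le> y\<^sup>2" shows "x \<le> y"
proof (rule ccontr)
  assume "\<not> x \<le> y"
  then have "y < x" by simp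
  then have "y\<^sup>2 < x\<^sup>2"
  proof (cases x rule: ennreal_cases)
    case (real s)
    obtain r where r: "y = ennreal r" "0 \<le> r"
      using \<open>y < x\<close> real by (cases y rule: ennreal_cases) auto
    have "r < s" using \<open>y < x\<close> real r by (simp add: ennreal_less_iff)
    then have "r\<^sup>2 < s\<^sup>2" using r by (intro power_strict_mono) auto
    then show ?thesis using r real by (simp add: ennreal_power ennreal_less_iff)
  next
    case top
    then show ?thesis using \<open>y < x\<close> by (simp add: power_less_top_ennreal)
  qed
  with assms show False by simp
qed

lemma le_ennreal_sqrt: "(x::ennreal)\<^sup>2 \<le> y \<Longrightarrow> x \<le> ennreal_sqrt y"
  by (rule power2_le_imp_le_ennreal) simp

lemma ennreal_sqrt_mult: "ennreal_sqrt (x * y) = ennreal_sqrt x * ennreal_sqrt y"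
  by (rule antisym; rule power2_le_imp_le_ennreal) (simp_all add: power_mult_distrib)

lemma ennreal_sqrt_mono: "x \<le> y \<Longrightarrow> ennreal_sqrt x \<le> ennreal_sqrt y"
  by (rule power2_le_imp_le_ennreal) simp

lemma ennreal_sqrt_power2[simp]: "ennreal_sqrt (x\<^sup>2) = x"
  by (rule antisym; rule power2_le_imp_le_ennreal) simp_all

lemma nn_integral_power2_eq_double:
  fixes f :: "'a \<Rightarrow> ennreal"
  assumes [measurable]: "f \<in> borel_measurable M"
  shows "(\<integral>\<^sup>+x. f x \<partial>M)\<^sup>2 = (\<integral>\<^sup>+x. \<integral>\<^sup>+y. f x * f y \<partial>M \<partial>M)"
proof -
  have "(\<integral>\<^sup>+x. f x \<partial>M)\<^sup>2 = (\<integral>\<^sup>+x. f x * (\<integral>\<^sup>+y. f y \<partial>M) \<partial>M)"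
    by (simp add: power2_eq_square nn_integral_multc)
  also have "\<dots> = (\<integral>\<^sup>+x. \<integral>\<^sup>+y. f x * f y \<partial>M \<partial>M)"
    by (simp add: nn_integral_cmult)
  finally show ?thesis .
qed

lemma Cauchy_Schwarz_nn_integral_sqrt:
  fixes u v :: "'a \<Rightarrow> ennreal"
  assumes [measurable]: "u \<in> borel_measurable M" "v \<in> borel_measurable M"
  shows "(\<integral>\<^sup>+x. u x * v x \<partial>M) \<le> ennreal_sqrt (\<integral>\<^sup>+x. (u x)\<^sup>2 \<partial>M) * ennreal_sqrt (\<integral>\<^sup>+x. (v x)\<^sup>2 \<partial>M)"
  unfolding ennreal_sqrt_mult[symmetric] by (rule le_ennreal_sqrt, rule Cauchy_Schwarz_nn_integral) measurable

section \<open>Cauchy--Schwarz on the \<open>(\<tau>, \<xi>)\<close>-slices\<close>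

definition modulation_weight :: "real \<Rightarrow> real \<times> real \<times> real \<Rightarrow> ennreal" where
  "modulation_weight b \<zeta> = ennreal (jb (fst \<zeta> - fst (snd \<zeta>) ^ 3 - snd (snd \<zeta>) ^ 3) powr b)"

lemma borel_measurable_modulation_weight[measurable]: "modulation_weight b \<in> borel_measurable lborel3"
  unfolding modulation_weight_def by measurable

text \<open>The \<open>(\<tau>\<^sub>1, \<xi>\<^sub>1)\<close>-integral of the bilinear integrand at the output point \<open>(\<tau>, \<xi>)\<close>,
  with the \<open>\<eta>\<close>-frequencies of the two factors frozen at \<open>\<eta>1\<close> and \<open>\<eta>2\<close>.\<close>
definition slice_conv :: "(real \<times> real \<times> real \<Rightarrow> ennreal) \<Rightarrow> (real \<times> real \<times> real \<Rightarrow> ennreal) \<Rightarrow> real \<Rightarrow> real \<Rightarrow> real \<Rightarrow> real \<Rightarrow> ennreal" where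
  "slice_conv F G \<tau> \<xi> \<eta>1 \<eta>2 = (\<integral>\<^sup>+p. ennreal (\<bar>snd p - (\<xi> - snd p)\<bar> powr (1/2)) * F (fst p, snd p, \<eta>1) * G (\<tau> - fst p, \<xi> - snd p, \<eta>2) \<partial>lborel2)"

definition weighted_slice_conv :: "real \<Rightarrow> (real \<times> real \<times> real \<Rightarrow> ennreal) \<Rightarrow> (real \<times> real \<times> real \<Rightarrow> ennreal) \<Rightarrow> real \<Rightarrow> real \<Rightarrow> real \<Rightarrow> real \<Rightarrow> ennreal" where
  "weighted_slice_conv b F G \<tau> \<xi> \<eta>1 \<eta>2 = (\<integral>\<^sup>+p. (modulation_weight b (fst p, snd p, \<eta>1) * F (fst p, snd p, \<eta>1))\<^sup>2 * (modulation_weight b (\<tau> - fst p, \<xi> - snd p, \<eta>2) * G (\<tau> - fst p, \<xi> - snd p, \<eta>2))\<^sup>2 \<partial>lborel2)"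

lemma slice_conv_sq_le:
  fixes F G :: "real \<times> real \<times> real \<Rightarrow> ennreal"
  assumes [measurable]: "F \<in> borel_measurable lborel3" "G \<in> borel_measurable lborel3" and b: "b \<ge> 0"
  shows "ennreal \<bar>\<xi>\<bar> * (slice_conv F G \<tau> \<xi> \<eta>1 \<eta>2)\<^sup>2 \<le> resonance_constant (2 * b) * weighted_slice_conv b F G \<tau> \<xi> \<eta>1 \<eta>2"
proof -
  define j1 where "j1 = (\<lambda>p::real\<times>real. jb (fst p - snd p ^ 3 - \<eta>1 ^ 3))"
  define j2 where "j2 = (\<lambda>p::real\<times>real. jb (\<tau> - fst p - (\<xi> - snd p) ^ 3 - \<eta>2 ^ 3))"
  have [measurable]: "j1 \<in> borel_measurable lborel2" "j2 \<in> borel_measurable lborel2"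
    unfolding j1_def j2_def by measurable
  have j1p: "j1 p > 0" and j2p: "j2 p > 0" for p unfolding j1_def j2_def by (auto intro: jb_pos)
  define u where "u = (\<lambda>p::real\<times>real. ennreal (\<bar>snd p - (\<xi> - snd p)\<bar> powr (1/2) * (j1 p powr (-b) * j2 p powr (-b))))"
  define v where "v = (\<lambda>p::real\<times>real. modulation_weight b (fst p, snd p, \<eta>1) * F (fst p, snd p, \<eta>1) * (modulation_weight b (\<tau> - fst p, \<xi> - snd p, \<eta>2) * G (\<tau> - fst p, \<xi> - snd p, \<eta>2)))"
  have [measurable]: "u \<in> borel_measurable lborel2" "v \<in> borel_measurable lborel2"
    unfolding u_def v_def by measurable
  have W1: "modulation_weight b (fst p, snd p, \<eta>1) = ennreal (j1 p powr b)" for p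
    unfolding modulation_weight_def j1_def by simp
  have W2: "modulation_weight b (\<tau> - fst p, \<xi> - snd p, \<eta>2) = ennreal (j2 p powr b)" for p
    unfolding modulation_weight_def j2_def by simp
  have uv: "ennreal (\<bar>snd p - (\<xi> - snd p)\<bar> powr (1/2)) * F (fst p, snd p, \<eta>1) * G (\<tau> - fst p, \<xi> - snd p, \<eta>2) = u p * v p" for p
  proof -
    have "j1 p powr (-b) * j1 p powr b = 1" "j2 p powr (-b) * j2 p powr b = 1"
      using j1p[of p] j2p[of p] by (simp_all add: powr_minus field_simps)
    then have "ennreal (j1 p powr (-b)) * ennreal (j1 p powr b) = 1" "ennreal (j2 p powr (-b)) * ennreal (j2 p powr b) = 1"
      by (simp_all add: ennreal_mult[symmetric])
    moreover have "u p * v p = ennreal (\<bar>snd p - (\<xi> - snd p)\<bar> powr (1/2))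
        * (ennreal (j1 p powr (-b)) * ennreal (j1 p powr b)) * (ennreal (j2 p powr (-b)) * ennreal (j2 p powr b))
        * F (fst p, snd p, \<eta>1) * G (\<tau> - fst p, \<xi> - snd p, \<eta>2)"
      unfolding u_def v_def W1 W2 by (simp add: ennreal_mult mult_ac)
    ultimately show ?thesis by simp
  qed
  have "(slice_conv F G \<tau> \<xi> \<eta>1 \<eta>2)\<^sup>2 = (\<integral>\<^sup>+p. u p * v p \<partial>lborel2)\<^sup>2"
    unfolding slice_conv_def uv ..
  also have "\<dots> \<le> (\<integral>\<^sup>+p. u p ^ 2 \<partial>lborel2) * (\<integral>\<^sup>+p. v p ^ 2 \<partial>lborel2)"
    by (rule Cauchy_Schwarz_nn_integral) measurable
  finally have cs: "(slice_conv F G \<tau> \<xi> \<eta>1 \<eta>2)\<^sup>2 \<le> (\<integral>\<^sup>+p. u p ^ 2 \<partial>lborel2) * (\<integral>\<^sup>+p. v p ^ 2 \<partial>lborel2)" .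
  have v2: "(\<integral>\<^sup>+p. v p ^ 2 \<partial>lborel2) = weighted_slice_conv b F G \<tau> \<xi> \<eta>1 \<eta>2"
    unfolding weighted_slice_conv_def v_def by (simp add: power_mult_distrib)
  have u2: "ennreal \<bar>\<xi>\<bar> * (\<integral>\<^sup>+p. u p ^ 2 \<partial>lborel2) \<le> resonance_constant (2 * b)"
    unfolding u_def j1_def j2_def by (rule nn_integral_resonance_weight_sq_le[OF b])
  have "ennreal \<bar>\<xi>\<bar> * (slice_conv F G \<tau> \<xi> \<eta>1 \<eta>2)\<^sup>2 \<le> ennreal \<bar>\<xi>\<bar> * ((\<integral>\<^sup>+p. u p ^ 2 \<partial>lborel2) * (\<integral>\<^sup>+p. v p ^ 2 \<partial>lborel2))"
    by (intro mult_left_mono cs) simp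
  also have "\<dots> = (ennreal \<bar>\<xi>\<bar> * (\<integral>\<^sup>+p. u p ^ 2 \<partial>lborel2)) * weighted_slice_conv b F G \<tau> \<xi> \<eta>1 \<eta>2"
    by (simp add: v2 mult.assoc)
  also have "\<dots> \<le> resonance_constant (2 * b) * weighted_slice_conv b F G \<tau> \<xi> \<eta>1 \<eta>2"
    by (intro mult_right_mono u2) simp
  finally show ?thesis .
qed

lemma sigma_finite_lborel2: "sigma_finite_measure lborel2"
  by (simp add: lborel_prod lborel.sigma_finite_measure_axioms)

interpretation lborel2_lborel2: pair_sigma_finite lborel2 lborel2
  by (intro pair_sigma_finite.intro sigma_finite_lborel2)

interpretation lborel_lborel2: pair_sigma_finite lborel lborel2
  by (intro pair_sigma_finite.intro sigma_finite_lborel2 lborel.sigma_finite_measure_axioms)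

lemma measurable_slice_conv[measurable (raw)]:
  assumes "F \<in> borel_measurable lborel3" "G \<in> borel_measurable lborel3"
    "f \<in> borel_measurable M" "g \<in> borel_measurable M" "h \<in> borel_measurable M" "k \<in> borel_measurable M"
  shows "(\<lambda>x. slice_conv F G (f x) (g x) (h x) (k x)) \<in> borel_measurable M"
  using assms unfolding slice_conv_def by measurable

lemma measurable_weighted_slice_conv[measurable (raw)]:
  assumes "F \<in> borel_measurable lborel3" "G \<in> borel_measurable lborel3"
    "f \<in> borel_measurable M" "g \<in> borel_measurable M" "h \<in> borel_measurable M" "k \<in> borel_measurable M"
  shows "(\<lambda>x. weighted_slice_conv b F G (f x) (g x) (h x) (k x)) \<in> borel_measurable M"
  using assms unfolding weighted_slice_conv_def by measurable

lemma nn_integral_lborel2_translate: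
  fixes Y :: "real \<times> real \<Rightarrow> ennreal"
  assumes [measurable]: "Y \<in> borel_measurable lborel2"
  shows "(\<integral>\<^sup>+p. Y (fst p - a, snd p - c) \<partial>lborel2) = (\<integral>\<^sup>+p. Y p \<partial>lborel2)"
proof -
  have "(\<integral>\<^sup>+p. Y (fst p - a, snd p - c) \<partial>lborel2) = (\<integral>\<^sup>+x. \<integral>\<^sup>+y. Y (x - a, y - c) \<partial>lborel \<partial>lborel)"
    by (subst nn_integral_lborel2_fst) (simp, measurable)
  also have "\<dots> = (\<integral>\<^sup>+x. \<integral>\<^sup>+y. Y (x - a, y) \<partial>lborel \<partial>lborel)"
  proof (rule nn_integral_cong)
    fix x :: real assume "x \<in> space lborel"
    have m: "(\<lambda>y. Y (x - a, y)) \<in> borel_measurable borel" by measurable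
    show "(\<integral>\<^sup>+y. Y (x - a, y - c) \<partial>lborel) = (\<integral>\<^sup>+y. Y (x - a, y) \<partial>lborel)"
      using nn_integral_lborel_translate[OF m, of "-c"] by simp
  qed
  also have "\<dots> = (\<integral>\<^sup>+x. \<integral>\<^sup>+y. Y (x, y) \<partial>lborel \<partial>lborel)"
  proof -
    have m: "(\<lambda>x. \<integral>\<^sup>+y. Y (x, y) \<partial>lborel) \<in> borel_measurable borel" by measurable
    show ?thesis using nn_integral_lborel_translate[OF m, of "-a"] by simp
  qed
  also have "\<dots> = (\<integral>\<^sup>+p. Y p \<partial>lborel2)"
    by (subst nn_integral_lborel2_fst) (simp, measurable)
  finally show ?thesis .
qed

definition slice_norm_sq :: "real \<Rightarrow> (real \<times> real \<times> real \<Rightarrow> ennreal) \<Rightarrow> real \<Rightarrow> ennreal" where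
  "slice_norm_sq b F e = (\<integral>\<^sup>+p. (modulation_weight b (fst p, snd p, e) * F (fst p, snd p, e))\<^sup>2 \<partial>lborel2)"

lemma measurable_slice_norm_sq[measurable (raw)]:
  assumes "F \<in> borel_measurable lborel3" "h \<in> borel_measurable M"
  shows "(\<lambda>x. slice_norm_sq b F (h x)) \<in> borel_measurable M"
  using assms unfolding slice_norm_sq_def by measurable

lemma nn_integral_weighted_slice_conv:
  assumes [measurable]: "F \<in> borel_measurable lborel3" "G \<in> borel_measurable lborel3"
  shows "(\<integral>\<^sup>+p. weighted_slice_conv b F G (fst p) (snd p) e1 e2 \<partial>lborel2) = slice_norm_sq b F e1 * slice_norm_sq b G e2"
proof -
  let ?X = "\<lambda>q::real\<times>real. (modulation_weight b (fst q, snd q, e1) * F (fst q, snd q, e1))\<^sup>2"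
  let ?Y = "\<lambda>q::real\<times>real. (modulation_weight b (fst q, snd q, e2) * G (fst q, snd q, e2))\<^sup>2"
  have "(\<integral>\<^sup>+p. weighted_slice_conv b F G (fst p) (snd p) e1 e2 \<partial>lborel2) = (\<integral>\<^sup>+p. \<integral>\<^sup>+q. ?X q * ?Y (fst p - fst q, snd p - snd q) \<partial>lborel2 \<partial>lborel2)"
    unfolding weighted_slice_conv_def by simp
  also have "\<dots> = (\<integral>\<^sup>+q. \<integral>\<^sup>+p. ?X q * ?Y (fst p - fst q, snd p - snd q) \<partial>lborel2 \<partial>lborel2)"
    by (rule lborel2_lborel2.Fubini'[symmetric]) measurable
  also have "\<dots> = (\<integral>\<^sup>+q. ?X q * (\<integral>\<^sup>+p. ?Y (fst p - fst q, snd p - snd q) \<partial>lborel2) \<partial>lborel2)"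
    by (intro nn_integral_cong nn_integral_cmult) measurable
  also have "\<dots> = (\<integral>\<^sup>+q. ?X q * (\<integral>\<^sup>+p. ?Y p \<partial>lborel2) \<partial>lborel2)"
    by (intro nn_integral_cong arg_cong2[where f="(*)"] refl nn_integral_lborel2_translate) measurable
  also have "\<dots> = (\<integral>\<^sup>+q. ?X q \<partial>lborel2) * (\<integral>\<^sup>+p. ?Y p \<partial>lborel2)"
    by (rule nn_integral_multc) measurable
  finally show ?thesis unfolding slice_norm_sq_def .
qed

lemma nn_integral_slice_conv_sq_le:
  fixes F G :: "real \<times> real \<times> real \<Rightarrow> ennreal"
  assumes [measurable]: "F \<in> borel_measurable lborel3" "G \<in> borel_measurable lborel3" and b: "b \<ge> 0"
  shows "(\<integral>\<^sup>+p. ennreal \<bar>snd p\<bar> * (slice_conv F G (fst p) (snd p) e1 e2)\<^sup>2 \<partial>lborel2)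
    \<le> resonance_constant (2 * b) * (slice_norm_sq b F e1 * slice_norm_sq b G e2)"
proof -
  have "(\<integral>\<^sup>+p. ennreal \<bar>snd p\<bar> * (slice_conv F G (fst p) (snd p) e1 e2)\<^sup>2 \<partial>lborel2)
      \<le> (\<integral>\<^sup>+p. resonance_constant (2 * b) * weighted_slice_conv b F G (fst p) (snd p) e1 e2 \<partial>lborel2)"
    by (intro nn_integral_mono slice_conv_sq_le b) simp_all
  also have "\<dots> = resonance_constant (2 * b) * (\<integral>\<^sup>+p. weighted_slice_conv b F G (fst p) (snd p) e1 e2 \<partial>lborel2)"
    by (rule nn_integral_cmult) measurable
  finally show ?thesis by (simp add: nn_integral_weighted_slice_conv)
qed

lemma Minkowski_nn_integral_power2:
  fixes Q :: "'a \<Rightarrow> 'b \<Rightarrow> ennreal"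
  assumes M: "sigma_finite_measure M" and N: "sigma_finite_measure N"
    and [measurable]: "(\<lambda>(e, p). Q e p) \<in> borel_measurable (N \<Otimes>\<^sub>M M)"
  shows "(\<integral>\<^sup>+p. (\<integral>\<^sup>+e. Q e p \<partial>N)\<^sup>2 \<partial>M) \<le> (\<integral>\<^sup>+e. ennreal_sqrt (\<integral>\<^sup>+p. (Q e p)\<^sup>2 \<partial>M) \<partial>N)\<^sup>2"
proof -
  interpret MN: pair_sigma_finite M N
    using M N by (rule pair_sigma_finite.intro)
  have "(\<integral>\<^sup>+p. (\<integral>\<^sup>+e. Q e p \<partial>N)\<^sup>2 \<partial>M) = (\<integral>\<^sup>+p. \<integral>\<^sup>+e. \<integral>\<^sup>+e'. Q e p * Q e' p \<partial>N \<partial>N \<partial>M)"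
    by (intro nn_integral_cong nn_integral_power2_eq_double) measurable
  also have "\<dots> = (\<integral>\<^sup>+e. \<integral>\<^sup>+p. \<integral>\<^sup>+e'. Q e p * Q e' p \<partial>N \<partial>M \<partial>N)"
    by (rule MN.Fubini'[symmetric]) measurable
  also have "\<dots> = (\<integral>\<^sup>+e. \<integral>\<^sup>+e'. \<integral>\<^sup>+p. Q e p * Q e' p \<partial>M \<partial>N \<partial>N)"
    by (intro nn_integral_cong MN.Fubini'[symmetric]) measurable
  also have "\<dots> \<le> (\<integral>\<^sup>+e. \<integral>\<^sup>+e'. ennreal_sqrt (\<integral>\<^sup>+p. (Q e p)\<^sup>2 \<partial>M) * ennreal_sqrt (\<integral>\<^sup>+p. (Q e' p)\<^sup>2 \<partial>M) \<partial>N \<partial>N)"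
    by (intro nn_integral_mono Cauchy_Schwarz_nn_integral_sqrt) measurable
  also have "\<dots> = (\<integral>\<^sup>+e. ennreal_sqrt (\<integral>\<^sup>+p. (Q e p)\<^sup>2 \<partial>M) \<partial>N)\<^sup>2"
    by (rule nn_integral_power2_eq_double[symmetric]) measurable
  finally show ?thesis .
qed

lemma slice_conv_eta_integral_sq_le:
  fixes F G :: "real \<times> real \<times> real \<Rightarrow> ennreal"
  assumes [measurable]: "F \<in> borel_measurable lborel3" "G \<in> borel_measurable lborel3" "ch \<in> borel_measurable borel"
    and b: "b \<ge> 0"
  shows "(\<integral>\<^sup>+p. ennreal \<bar>snd p\<bar> * (\<integral>\<^sup>+e. ch e * slice_conv F G (fst p) (snd p) e (\<eta> - e) \<partial>lborel)\<^sup>2 \<partial>lborel2)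
        \<le> resonance_constant (2 * b) * (\<integral>\<^sup>+e. ch e * (ennreal_sqrt (slice_norm_sq b F e) * ennreal_sqrt (slice_norm_sq b G (\<eta> - e))) \<partial>lborel)\<^sup>2"
proof -
  define Q where "Q e p = ennreal_sqrt (ennreal \<bar>snd p\<bar>) * (ch e * slice_conv F G (fst p) (snd p) e (\<eta> - e))" for e p
  define R where "R e = ch e * (ennreal_sqrt (slice_norm_sq b F e) * ennreal_sqrt (slice_norm_sq b G (\<eta> - e)))" for e
  have [measurable]: "(\<lambda>(e, p). Q e p) \<in> borel_measurable (lborel \<Otimes>\<^sub>M lborel2)" "R \<in> borel_measurable borel"
    unfolding Q_def R_def by measurable
  have Q_integral: "(\<integral>\<^sup>+e. Q e p \<partial>lborel) = ennreal_sqrt (ennreal \<bar>snd p\<bar>) * (\<integral>\<^sup>+e. ch e * slice_conv F G (fst p) (snd p) e (\<eta> - e) \<partial>lborel)" for p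
    unfolding Q_def by (rule nn_integral_cmult) measurable
  have Q_bound: "ennreal_sqrt (\<integral>\<^sup>+p. (Q e p)\<^sup>2 \<partial>lborel2) \<le> ennreal_sqrt (resonance_constant (2 * b)) * R e" for e
  proof -
    have "(\<integral>\<^sup>+p. (Q e p)\<^sup>2 \<partial>lborel2) = (\<integral>\<^sup>+p. (ch e)\<^sup>2 * (ennreal \<bar>snd p\<bar> * (slice_conv F G (fst p) (snd p) e (\<eta> - e))\<^sup>2) \<partial>lborel2)"
      unfolding Q_def by (intro nn_integral_cong) (simp add: power_mult_distrib mult_ac)
    also have "\<dots> = (ch e)\<^sup>2 * (\<integral>\<^sup>+p. ennreal \<bar>snd p\<bar> * (slice_conv F G (fst p) (snd p) e (\<eta> - e))\<^sup>2 \<partial>lborel2)"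
      by (rule nn_integral_cmult) measurable
    also have "\<dots> \<le> (ch e)\<^sup>2 * (resonance_constant (2 * b) * (slice_norm_sq b F e * slice_norm_sq b G (\<eta> - e)))"
      by (intro mult_left_mono nn_integral_slice_conv_sq_le b) simp_all
    finally have "ennreal_sqrt (\<integral>\<^sup>+p. (Q e p)\<^sup>2 \<partial>lborel2)
        \<le> ennreal_sqrt ((ch e)\<^sup>2 * (resonance_constant (2 * b) * (slice_norm_sq b F e * slice_norm_sq b G (\<eta> - e))))"
      by (rule ennreal_sqrt_mono)
    also have "\<dots> = ennreal_sqrt (resonance_constant (2 * b)) * R e"
      unfolding R_def by (simp add: ennreal_sqrt_mult mult_ac)
    finally show ?thesis .
  qed
  have "(\<integral>\<^sup>+p. ennreal \<bar>snd p\<bar> * (\<integral>\<^sup>+e. ch e * slice_conv F G (fst p) (snd p) e (\<eta> - e) \<partial>lborel)\<^sup>2 \<partial>lborel2)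
      = (\<integral>\<^sup>+p. (\<integral>\<^sup>+e. Q e p \<partial>lborel)\<^sup>2 \<partial>lborel2)"
    by (simp add: Q_integral power_mult_distrib)
  also have "\<dots> \<le> (\<integral>\<^sup>+e. ennreal_sqrt (\<integral>\<^sup>+p. (Q e p)\<^sup>2 \<partial>lborel2) \<partial>lborel)\<^sup>2"
    by (rule Minkowski_nn_integral_power2[OF sigma_finite_lborel2 lborel.sigma_finite_measure_axioms]) measurable
  also have "\<dots> \<le> (\<integral>\<^sup>+e. ennreal_sqrt (resonance_constant (2 * b)) * R e \<partial>lborel)\<^sup>2"
    by (intro power_mono_ennreal nn_integral_mono Q_bound)
  also have "\<dots> = resonance_constant (2 * b) * (\<integral>\<^sup>+e. R e \<partial>lborel)\<^sup>2"
    by (subst nn_integral_cmult) (simp_all add: power_mult_distrib)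
  finally show ?thesis unfolding R_def .
qed

lemma nn_integral_lborel3_eta_outer:
  fixes h :: "real \<times> real \<times> real \<Rightarrow> ennreal"
  assumes [measurable]: "h \<in> borel_measurable lborel3"
  shows "(\<integral>\<^sup>+z. h z \<partial>lborel3) = (\<integral>\<^sup>+e. \<integral>\<^sup>+p. h (fst p, snd p, e) \<partial>lborel2 \<partial>lborel)"
proof -
  have "(\<integral>\<^sup>+z. h z \<partial>lborel3) = (\<integral>\<^sup>+t. \<integral>\<^sup>+q. h (t, q) \<partial>lborel2 \<partial>lborel)"
    using sigma_finite_measure.nn_integral_fst[OF sigma_finite_lborel2 assms] by simp
  also have "\<dots> = (\<integral>\<^sup>+t. \<integral>\<^sup>+x. \<integral>\<^sup>+e. h (t, x, e) \<partial>lborel \<partial>lborel \<partial>lborel)"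
    by (intro nn_integral_cong) (subst nn_integral_lborel2_fst, simp_all, measurable)
  also have "\<dots> = (\<integral>\<^sup>+t. \<integral>\<^sup>+e. \<integral>\<^sup>+x. h (t, x, e) \<partial>lborel \<partial>lborel \<partial>lborel)"
    by (intro nn_integral_cong lborel_pair.Fubini') measurable
  also have "\<dots> = (\<integral>\<^sup>+e. \<integral>\<^sup>+t. \<integral>\<^sup>+x. h (t, x, e) \<partial>lborel \<partial>lborel \<partial>lborel)"
    by (rule lborel_pair.Fubini'[symmetric]) measurable
  also have "\<dots> = (\<integral>\<^sup>+e. \<integral>\<^sup>+p. h (fst p, snd p, e) \<partial>lborel2 \<partial>lborel)"
    by (intro nn_integral_cong) (subst nn_integral_lborel2_fst, simp_all, measurable)
  finally show ?thesis .
qed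

definition weighted_norm_sq :: "real \<Rightarrow> (real \<times> real \<times> real \<Rightarrow> ennreal) \<Rightarrow> ennreal" where
  "weighted_norm_sq b F = (\<integral>\<^sup>+e. slice_norm_sq b F e \<partial>lborel)"

lemma weighted_norm_sq_eq:
  assumes [measurable]: "F \<in> borel_measurable lborel3"
  shows "weighted_norm_sq b F = (\<integral>\<^sup>+z. (modulation_weight b z * F z)\<^sup>2 \<partial>lborel3)"
  unfolding weighted_norm_sq_def slice_norm_sq_def by (subst nn_integral_lborel3_eta_outer) (simp_all, measurable)

lemma weighted_eta_integral_le:
  fixes F G :: "real \<times> real \<times> real \<Rightarrow> ennreal"
  assumes [measurable]: "F \<in> borel_measurable lborel3" "G \<in> borel_measurable lborel3" "case_prod ch \<in> borel_measurable (lborel \<Otimes>\<^sub>M lborel)"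
    "\<omega> \<in> borel_measurable borel"
    and b: "b \<ge> 0"
  shows "(\<integral>\<^sup>+z. \<omega> (snd (snd z)) * (ennreal \<bar>fst (snd z)\<bar> * (\<integral>\<^sup>+e. ch (snd (snd z)) e * slice_conv F G (fst z) (fst (snd z)) e (snd (snd z) - e) \<partial>lborel)\<^sup>2) \<partial>lborel3)
     \<le> (\<integral>\<^sup>+\<eta>. \<omega> \<eta> * (resonance_constant (2 * b) * (\<integral>\<^sup>+e. ch \<eta> e * (ennreal_sqrt (slice_norm_sq b F e) * ennreal_sqrt (slice_norm_sq b G (\<eta> - e))) \<partial>lborel)\<^sup>2) \<partial>lborel)"
proof -
  have "(\<integral>\<^sup>+z. \<omega> (snd (snd z)) * (ennreal \<bar>fst (snd z)\<bar> * (\<integral>\<^sup>+e. ch (snd (snd z)) e * slice_conv F G (fst z) (fst (snd z)) e (snd (snd z) - e) \<partial>lborel)\<^sup>2) \<partial>lborel3)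
     = (\<integral>\<^sup>+\<eta>. \<integral>\<^sup>+p. \<omega> \<eta> * (ennreal \<bar>snd p\<bar> * (\<integral>\<^sup>+e. ch \<eta> e * slice_conv F G (fst p) (snd p) e (\<eta> - e) \<partial>lborel)\<^sup>2) \<partial>lborel2 \<partial>lborel)"
    by (subst nn_integral_lborel3_eta_outer) (simp_all, measurable)
  also have "\<dots> = (\<integral>\<^sup>+\<eta>. \<omega> \<eta> * (\<integral>\<^sup>+p. ennreal \<bar>snd p\<bar> * (\<integral>\<^sup>+e. ch \<eta> e * slice_conv F G (fst p) (snd p) e (\<eta> - e) \<partial>lborel)\<^sup>2 \<partial>lborel2) \<partial>lborel)"
    by (intro nn_integral_cong nn_integral_cmult) measurable
  also have "\<dots> \<le> (\<integral>\<^sup>+\<eta>. \<omega> \<eta> * (resonance_constant (2 * b) * (\<integral>\<^sup>+e. ch \<eta> e * (ennreal_sqrt (slice_norm_sq b F e) * ennreal_sqrt (slice_norm_sq b G (\<eta> - e))) \<partial>lborel)\<^sup>2) \<partial>lborel)"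
    by (intro nn_integral_mono mult_left_mono slice_conv_eta_integral_sq_le b) simp_all
  finally show ?thesis .
qed

section \<open>Localisation in \<open>\<eta>\<close>\<close>

lemma nn_integral_convolution:
  fixes f g :: "real \<Rightarrow> ennreal"
  assumes [measurable]: "f \<in> borel_measurable borel" "g \<in> borel_measurable borel"
  shows "(\<integral>\<^sup>+\<eta>. \<integral>\<^sup>+e. f e * g (\<eta> - e) \<partial>lborel \<partial>lborel) = (\<integral>\<^sup>+e. f e \<partial>lborel) * (\<integral>\<^sup>+e. g e \<partial>lborel)"
proof -
  have "(\<integral>\<^sup>+\<eta>. \<integral>\<^sup>+e. f e * g (\<eta> - e) \<partial>lborel \<partial>lborel) = (\<integral>\<^sup>+e. \<integral>\<^sup>+\<eta>. f e * g (\<eta> - e) \<partial>lborel \<partial>lborel)"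
    by (rule lborel_pair.Fubini') measurable
  also have "\<dots> = (\<integral>\<^sup>+e. f e * (\<integral>\<^sup>+\<eta>. g (\<eta> - e) \<partial>lborel) \<partial>lborel)"
    by (intro nn_integral_cong nn_integral_cmult) measurable
  also have "\<dots> = (\<integral>\<^sup>+e. f e * (\<integral>\<^sup>+\<eta>. g \<eta> \<partial>lborel) \<partial>lborel)"
  proof -
    have "(\<integral>\<^sup>+\<eta>. g (\<eta> - e) \<partial>lborel) = (\<integral>\<^sup>+\<eta>. g \<eta> \<partial>lborel)" for e
      using nn_integral_lborel_translate[of g "-e"] by simp
    then show ?thesis by simp
  qed
  also have "\<dots> = (\<integral>\<^sup>+e. f e \<partial>lborel) * (\<integral>\<^sup>+e. g e \<partial>lborel)"
    by (rule nn_integral_multc) measurable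
  finally show ?thesis .
qed

lemma indicator_power2_ennreal: "(indicator I x :: ennreal)\<^sup>2 = indicator I x"
  by (simp add: indicator_def)

lemma localized_input_le:
  fixes F G :: "real \<times> real \<times> real \<Rightarrow> ennreal"
  assumes [measurable]: "F \<in> borel_measurable lborel3" "G \<in> borel_measurable lborel3"
    "case_prod ch \<in> borel_measurable (lborel \<Otimes>\<^sub>M lborel)"
    and b: "b \<ge> 0" and L: "\<And>\<eta>. (\<integral>\<^sup>+e. (ch \<eta> e)\<^sup>2 \<partial>lborel) \<le> L"
  shows "(\<integral>\<^sup>+z. ennreal \<bar>fst (snd z)\<bar> * (\<integral>\<^sup>+e. ch (snd (snd z)) e * slice_conv F G (fst z) (fst (snd z)) e (snd (snd z) - e) \<partial>lborel)\<^sup>2 \<partial>lborel3)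
     \<le> resonance_constant (2 * b) * L * (weighted_norm_sq b F * weighted_norm_sq b G)"
proof -
  let ?S = "\<lambda>\<eta> e. ennreal_sqrt (slice_norm_sq b F e) * ennreal_sqrt (slice_norm_sq b G (\<eta> - e))"
  have "(\<integral>\<^sup>+z. ennreal \<bar>fst (snd z)\<bar> * (\<integral>\<^sup>+e. ch (snd (snd z)) e * slice_conv F G (fst z) (fst (snd z)) e (snd (snd z) - e) \<partial>lborel)\<^sup>2 \<partial>lborel3)
     = (\<integral>\<^sup>+z. (\<lambda>_. 1) (snd (snd z)) * (ennreal \<bar>fst (snd z)\<bar> * (\<integral>\<^sup>+e. ch (snd (snd z)) e * slice_conv F G (fst z) (fst (snd z)) e (snd (snd z) - e) \<partial>lborel)\<^sup>2) \<partial>lborel3)"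
    by simp
  also have "\<dots> \<le> (\<integral>\<^sup>+\<eta>. (\<lambda>_. 1) \<eta> * (resonance_constant (2 * b) * (\<integral>\<^sup>+e. ch \<eta> e * ?S \<eta> e \<partial>lborel)\<^sup>2) \<partial>lborel)"
    by (rule weighted_eta_integral_le[OF assms(1-3) _ b]) measurable
  also have "\<dots> \<le> (\<integral>\<^sup>+\<eta>. resonance_constant (2 * b) * (L * (\<integral>\<^sup>+e. slice_norm_sq b F e * slice_norm_sq b G (\<eta> - e) \<partial>lborel)) \<partial>lborel)"
  proof (intro nn_integral_mono)
    fix \<eta> :: real
    have "(\<integral>\<^sup>+e. ch \<eta> e * ?S \<eta> e \<partial>lborel)\<^sup>2 \<le> (\<integral>\<^sup>+e. (ch \<eta> e)\<^sup>2 \<partial>lborel) * (\<integral>\<^sup>+e. (?S \<eta> e)\<^sup>2 \<partial>lborel)"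
      by (rule Cauchy_Schwarz_nn_integral) measurable
    also have "\<dots> \<le> L * (\<integral>\<^sup>+e. slice_norm_sq b F e * slice_norm_sq b G (\<eta> - e) \<partial>lborel)"
      by (intro mult_mono L) (simp_all add: power_mult_distrib)
    finally show "(\<lambda>_. 1) \<eta> * (resonance_constant (2 * b) * (\<integral>\<^sup>+e. ch \<eta> e * ?S \<eta> e \<partial>lborel)\<^sup>2)
        \<le> resonance_constant (2 * b) * (L * (\<integral>\<^sup>+e. slice_norm_sq b F e * slice_norm_sq b G (\<eta> - e) \<partial>lborel))"
      by (simp add: mult_left_mono)
  qed
  also have "\<dots> = resonance_constant (2 * b) * L * (\<integral>\<^sup>+\<eta>. \<integral>\<^sup>+e. slice_norm_sq b F e * slice_norm_sq b G (\<eta> - e) \<partial>lborel \<partial>lborel)"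
    by (simp only: mult.assoc[symmetric]) (rule nn_integral_cmult, measurable)
  also have "\<dots> = resonance_constant (2 * b) * L * (weighted_norm_sq b F * weighted_norm_sq b G)"
    unfolding weighted_norm_sq_def by (subst nn_integral_convolution) (simp_all, measurable)
  finally show ?thesis .
qed

lemma nn_integral_indicator_reflect:
  assumes [measurable]: "I \<in> sets borel"
  shows "(\<integral>\<^sup>+e. (indicator I ((\<eta>::real) - e) :: ennreal)\<^sup>2 \<partial>lborel) = emeasure lborel I"
proof -
  have "(\<integral>\<^sup>+e. (indicator I (\<eta> - e) :: ennreal)\<^sup>2 \<partial>lborel) = (\<integral>\<^sup>+e. indicator I (\<eta> - e) \<partial>lborel)"
    by (simp add: indicator_power2_ennreal)
  also have "\<dots> = (\<integral>\<^sup>+e. indicator I e \<partial>lborel)"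
    by (rule nn_integral_lborel_reflect[of "indicator I"]) measurable
  finally show ?thesis by simp
qed

lemma localized_output_le:
  fixes F G :: "real \<times> real \<times> real \<Rightarrow> ennreal"
  assumes [measurable]: "F \<in> borel_measurable lborel3" "G \<in> borel_measurable lborel3" "I \<in> sets borel"
    and b: "b \<ge> 0" and L: "emeasure lborel I \<le> L"
  shows "(\<integral>\<^sup>+z. indicator I (snd (snd z)) * (ennreal \<bar>fst (snd z)\<bar> * (\<integral>\<^sup>+e. slice_conv F G (fst z) (fst (snd z)) e (snd (snd z) - e) \<partial>lborel)\<^sup>2) \<partial>lborel3)
     \<le> resonance_constant (2 * b) * L * (weighted_norm_sq b F * weighted_norm_sq b G)"
proof -
  let ?S = "\<lambda>\<eta> e. ennreal_sqrt (slice_norm_sq b F e) * ennreal_sqrt (slice_norm_sq b G (\<eta> - e))"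
  have "(\<integral>\<^sup>+z. indicator I (snd (snd z)) * (ennreal \<bar>fst (snd z)\<bar> * (\<integral>\<^sup>+e. slice_conv F G (fst z) (fst (snd z)) e (snd (snd z) - e) \<partial>lborel)\<^sup>2) \<partial>lborel3)
     = (\<integral>\<^sup>+z. indicator I (snd (snd z)) * (ennreal \<bar>fst (snd z)\<bar> * (\<integral>\<^sup>+e. (\<lambda>\<eta> e. 1) (snd (snd z)) e * slice_conv F G (fst z) (fst (snd z)) e (snd (snd z) - e) \<partial>lborel)\<^sup>2) \<partial>lborel3)"
    by simp
  also have "\<dots> \<le> (\<integral>\<^sup>+\<eta>. indicator I \<eta> * (resonance_constant (2 * b) * (\<integral>\<^sup>+e. (\<lambda>\<eta> e. 1) \<eta> e * ?S \<eta> e \<partial>lborel)\<^sup>2) \<partial>lborel)"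
    by (rule weighted_eta_integral_le[OF assms(1,2) _ _ b]) measurable
  also have "\<dots> \<le> (\<integral>\<^sup>+\<eta>. (resonance_constant (2 * b) * (weighted_norm_sq b F * weighted_norm_sq b G)) * indicator I \<eta> \<partial>lborel)"
  proof (intro nn_integral_mono)
    fix \<eta> :: real
    have "(\<integral>\<^sup>+e. ?S \<eta> e \<partial>lborel)\<^sup>2
        \<le> (\<integral>\<^sup>+e. (ennreal_sqrt (slice_norm_sq b F e))\<^sup>2 \<partial>lborel) * (\<integral>\<^sup>+e. (ennreal_sqrt (slice_norm_sq b G (\<eta> - e)))\<^sup>2 \<partial>lborel)"
      by (rule Cauchy_Schwarz_nn_integral) measurable
    also have "(\<integral>\<^sup>+e. (ennreal_sqrt (slice_norm_sq b G (\<eta> - e)))\<^sup>2 \<partial>lborel) = weighted_norm_sq b G"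
      unfolding weighted_norm_sq_def power2_ennreal_sqrt by (rule nn_integral_lborel_reflect) measurable
    finally have "(\<integral>\<^sup>+e. ?S \<eta> e \<partial>lborel)\<^sup>2 \<le> weighted_norm_sq b F * weighted_norm_sq b G"
      unfolding power2_ennreal_sqrt weighted_norm_sq_def .
    then show "indicator I \<eta> * (resonance_constant (2 * b) * (\<integral>\<^sup>+e. (\<lambda>\<eta> e. 1) \<eta> e * ?S \<eta> e \<partial>lborel)\<^sup>2)
        \<le> (resonance_constant (2 * b) * (weighted_norm_sq b F * weighted_norm_sq b G)) * indicator I \<eta>"
      by (simp add: mult_left_mono mult.commute)
  qed
  also have "\<dots> = resonance_constant (2 * b) * (weighted_norm_sq b F * weighted_norm_sq b G) * emeasure lborel I"
    by (simp add: nn_integral_cmult_indicator)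
  also have "\<dots> \<le> resonance_constant (2 * b) * (weighted_norm_sq b F * weighted_norm_sq b G) * L"
    by (intro mult_left_mono L) simp
  finally show ?thesis by (simp add: mult_ac)
qed

section \<open>The bilinear operator\<close>

lemma lborel_eq_lborel3: "(lborel :: (real \<times> real \<times> real) measure) = lborel3"
  by (simp add: lborel_prod)

lemma triple_diff_Pair[simp]: "(z::real\<times>real\<times>real) - (a, b, c) = (fst z - a, fst (snd z) - b, snd (snd z) - c)"
  by (simp add: prod_eq_iff)

lemma triple_diff_eq: "(z::real\<times>real\<times>real) - z1 = (fst z - fst z1, fst (snd z) - fst (snd z1), snd (snd z) - snd (snd z1))"
  by (simp add: prod_eq_iff)

lemma measurable_triple_diff[measurable]: "((-) (z::real\<times>real\<times>real)) \<in> measurable (borel \<Otimes>\<^sub>M borel \<Otimes>\<^sub>M borel) (borel \<Otimes>\<^sub>M borel \<Otimes>\<^sub>M borel)"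
proof -
  have "((-) z) = (\<lambda>z1. (fst z - fst z1, fst (snd z) - fst (snd z1), snd (snd z) - snd (snd z1)))"
    by (auto simp: fun_eq_iff)
  then show ?thesis by simp
qed

definition bilx_abs_integral :: "(real \<times> real \<times> real \<Rightarrow> complex) \<Rightarrow> (real \<times> real \<times> real \<Rightarrow> complex) \<Rightarrow> real \<times> real \<times> real \<Rightarrow> ennreal" where
  "bilx_abs_integral f g z = (\<integral>\<^sup>+z1. ennreal (cmod (bilx_integrand f g z z1)) \<partial>lborel3)"

lemma cmod_bilx_hat_power2_le:
  "ennreal ((cmod (bilx_hat f g z))\<^sup>2) \<le> ennreal \<bar>fst (snd z)\<bar> * (bilx_abs_integral f g z)\<^sup>2"
proof -
  have "ennreal (cmod (integral\<^sup>L lborel (bilx_integrand f g z))) \<le> bilx_abs_integral f g z"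
  proof (cases "integrable lborel (bilx_integrand f g z)")
    case True
    then show ?thesis unfolding bilx_abs_integral_def lborel_eq_lborel3[symmetric] by (rule integral_norm_bound_ennreal)
  next
    case False
    then show ?thesis by (simp add: not_integrable_integral_eq)
  qed
  then have "(ennreal (cmod (integral\<^sup>L lborel (bilx_integrand f g z))))\<^sup>2 \<le> (bilx_abs_integral f g z)\<^sup>2"
    by (rule power_mono_ennreal)
  then have "ennreal \<bar>fst (snd z)\<bar> * (ennreal (cmod (integral\<^sup>L lborel (bilx_integrand f g z))))\<^sup>2 \<le> ennreal \<bar>fst (snd z)\<bar> * (bilx_abs_integral f g z)\<^sup>2"
    by (rule mult_left_mono) simp
  moreover have "ennreal ((cmod (bilx_hat f g z))\<^sup>2) = ennreal \<bar>fst (snd z)\<bar> * (ennreal (cmod (integral\<^sup>L lborel (bilx_integrand f g z))))\<^sup>2"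
    unfolding bilx_hat_def
    by (simp add: norm_mult power_mult_distrib ennreal_mult ennreal_power powr_half_sqrt)
  ultimately show ?thesis by simp
qed

lemma borel_measurable_bilx_hat[measurable]:
  assumes [measurable]: "f \<in> borel_measurable lborel3" "g \<in> borel_measurable lborel3"
  shows "bilx_hat f g \<in> borel_measurable lborel3"
  unfolding bilx_hat_def bilx_integrand_def lborel_eq_lborel3 triple_diff_eq by measurable

definition enn_abs :: "(real \<times> real \<times> real \<Rightarrow> complex) \<Rightarrow> real \<times> real \<times> real \<Rightarrow> ennreal" where
  "enn_abs f z = ennreal (cmod (f z))"

lemma borel_measurable_enn_abs[measurable]:
  assumes [measurable]: "f \<in> borel_measurable lborel3"
  shows "enn_abs f \<in> borel_measurable lborel3"
  unfolding enn_abs_def by measurable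

lemma bilx_abs_integral_eq_slice_conv:
  assumes [measurable]: "f \<in> borel_measurable lborel3" "g \<in> borel_measurable lborel3"
  shows "bilx_abs_integral f g z = (\<integral>\<^sup>+e. slice_conv (enn_abs f) (enn_abs g) (fst z) (fst (snd z)) e (snd (snd z) - e) \<partial>lborel)"
  unfolding bilx_abs_integral_def
proof (subst nn_integral_lborel3_eta_outer)
  show "(\<lambda>z1. ennreal (cmod (bilx_integrand f g z z1))) \<in> borel_measurable lborel3"
    unfolding bilx_integrand_def by measurable
  show "(\<integral>\<^sup>+e. \<integral>\<^sup>+p. ennreal (cmod (bilx_integrand f g z (fst p, snd p, e))) \<partial>lborel2 \<partial>lborel) =
    (\<integral>\<^sup>+e. slice_conv (enn_abs f) (enn_abs g) (fst z) (fst (snd z)) e (snd (snd z) - e) \<partial>lborel)"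
    unfolding slice_conv_def bilx_integrand_def enn_abs_def
    by (intro nn_integral_cong) (simp add: norm_mult ennreal_mult)
qed

lemma enn_abs_Py_hat: "enn_abs (Py_hat I f) = (\<lambda>z. indicator I (snd (snd z)) * enn_abs f z)"
  by (auto simp: fun_eq_iff enn_abs_def Py_hat_def indicator_def split: prod.splits)

lemma slice_conv_indicator_left: "slice_conv (\<lambda>z. indicator I (snd (snd z)) * F z) G t x e e2 = indicator I e * slice_conv F G t x e e2"
  by (cases "e \<in> I") (simp_all add: slice_conv_def)

lemma slice_conv_indicator_right: "slice_conv F (\<lambda>z. indicator I (snd (snd z)) * G z) t x e e2 = indicator I e2 * slice_conv F G t x e e2"
  by (cases "e2 \<in> I") (simp_all add: slice_conv_def)

lemma borel_measurable_Py_hat[measurable]: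
  assumes [measurable]: "f \<in> borel_measurable lborel3" "I \<in> sets borel"
  shows "Py_hat I f \<in> borel_measurable lborel3"
proof -
  have "Py_hat I f = (\<lambda>z. if snd (snd z) \<in> I then f z else 0)"
    by (auto simp: Py_hat_def fun_eq_iff split: prod.splits)
  moreover have "(\<lambda>z. if snd (snd z) \<in> I then f z else 0) \<in> borel_measurable lborel3"
    by measurable
  ultimately show ?thesis by simp
qed

lemma l2sq_bilx_hat_le:
  "l2sq (bilx_hat f g) \<le> (\<integral>\<^sup>+z. ennreal \<bar>fst (snd z)\<bar> * (bilx_abs_integral f g z)\<^sup>2 \<partial>lborel3)"
  unfolding l2sq_def lborel_eq_lborel3 by (intro nn_integral_mono cmod_bilx_hat_power2_le)

lemma jb2_pos: "jb2 x y > 0"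
  unfolding jb2_def by (simp add: add_pos_nonneg)

lemma weighted_norm_sq_eq_Xsb_sq:
  assumes [measurable]: "f \<in> borel_measurable lborel3"
  shows "weighted_norm_sq b (enn_abs f) = Xsb_sq 0 b f"
  unfolding weighted_norm_sq_eq[OF borel_measurable_enn_abs[OF assms]] Xsb_sq_def lborel_eq_lborel3
proof (intro nn_integral_cong)
  fix z :: "real \<times> real \<times> real"
  obtain t x y where z: "z = (t, x, y)" by (cases z) auto
  have "Xsb_weight 0 b z = jb (t - x ^ 3 - y ^ 3) powr b"
    unfolding z Xsb_weight_def using jb2_pos[of x y] by simp
  then show "(modulation_weight b z * enn_abs f z)\<^sup>2 = ennreal ((Xsb_weight 0 b z * cmod (f z))\<^sup>2)"
    unfolding modulation_weight_def enn_abs_def z by (subst ennreal_mult[symmetric]) (auto simp: ennreal_power)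
qed

lemma borel_measurable_bilx_integrand[measurable]:
  assumes [measurable]: "f \<in> borel_measurable lborel3" "g \<in> borel_measurable lborel3"
  shows "bilx_integrand f g z \<in> borel_measurable lborel3"
  unfolding bilx_integrand_def by measurable

lemma bilx_defined_if_AE_finite:
  assumes [measurable]: "f \<in> borel_measurable lborel3" "g \<in> borel_measurable lborel3"
    and ae: "AE z in lborel3. bilx_abs_integral f g z < \<infinity>"
  shows "bilx_defined f g"
  unfolding bilx_defined_def lborel_eq_lborel3 using ae
proof eventually_elim
  case (elim z)
  show ?case
    by (rule integrableI_bounded) (use elim in \<open>simp_all add: bilx_abs_integral_def\<close>)
qed

lemma bilx_abs_integral_mono:
  assumes "\<And>z. cmod (f' z) \<le> cmod (f z)" "\<And>z. cmod (g' z) \<le> cmod (g z)"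
  shows "bilx_abs_integral f' g' z \<le> bilx_abs_integral f g z"
  unfolding bilx_abs_integral_def bilx_integrand_def
  by (intro nn_integral_mono ennreal_leI) (auto simp: norm_mult intro!: mult_mono assms)

lemma cmod_Py_hat_le: "cmod (Py_hat I f z) \<le> cmod (f z)"
  by (cases z) (simp add: Py_hat_def)

lemma bounded_interval_le: "bounded_interval I a c \<Longrightarrow> a \<le> c"
  by (simp add: bounded_interval_def)

lemma sets_borel_bounded_interval:
  assumes "bounded_interval I a c"
  shows "I \<in> sets borel"
proof -
  have "I = {a<..<c} \<union> (I \<inter> {a, c})" using assms by (auto simp: bounded_interval_def)
  moreover have "finite (I \<inter> {a, c})" by simp
  ultimately show ?thesis
    by (metis borel_open open_greaterThanLessThan finite_imp_closed borel_closed sets.Un)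
qed

lemma emeasure_bounded_interval_le:
  assumes "bounded_interval I a c"
  shows "emeasure lborel I \<le> ennreal (c - a)"
proof -
  have "emeasure lborel I \<le> emeasure lborel {a..c}"
    using assms by (intro emeasure_mono) (auto simp: bounded_interval_def)
  then show ?thesis using assms by (simp add: bounded_interval_def)
qed

lemma AE_xi_nonzero: "AE z in lborel3. fst (snd z) \<noteq> 0"
proof (rule AE_I')
  have "emeasure lborel2 ({0} \<times> UNIV) = emeasure lborel {0::real} * emeasure lborel (UNIV :: real set)"
    by (rule lborel.emeasure_pair_measure_Times) auto
  then have e2: "emeasure lborel2 ({0} \<times> UNIV) = 0" by simp
  have "emeasure lborel3 (UNIV \<times> ({0} \<times> UNIV)) = emeasure lborel (UNIV :: real set) * emeasure lborel2 ({0::real} \<times> (UNIV :: real set))"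
    by (rule sigma_finite_measure.emeasure_pair_measure_Times[OF sigma_finite_lborel2]) auto
  then have "emeasure lborel3 (UNIV \<times> ({0} \<times> UNIV)) = 0" using e2 by simp
  moreover have "UNIV \<times> ({0::real} \<times> (UNIV :: real set)) \<in> sets lborel3" by auto
  ultimately show "UNIV \<times> ({0::real} \<times> (UNIV :: real set)) \<in> null_sets lborel3" by auto
  show "{z \<in> space lborel3. \<not> fst (snd z) \<noteq> 0} \<subseteq> UNIV \<times> ({0} \<times> UNIV)" by auto
qed

text \<open>Restricting the output to \<open>\<eta> \<in> [-n, n]\<close> makes the weighted integral of the square finite;
  since \<open>\<xi> \<noteq> 0\<close> almost everywhere, the integral itself is then finite almost everywhere.\<close>
lemma AE_bilx_abs_integral_finite:
  assumes [measurable]: "f \<in> borel_measurable lborel3" "g \<in> borel_measurable lborel3"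
    and b: "b \<ge> 0" and fin: "weighted_norm_sq b (enn_abs f) < \<infinity>" "weighted_norm_sq b (enn_abs g) < \<infinity>" "resonance_constant (2 * b) < \<infinity>"
  shows "AE z in lborel3. bilx_abs_integral f g z < \<infinity>"
proof -
  define h where "h = (\<lambda>(n::nat) (z::real \<times> real \<times> real). indicator {- real n..real n} (snd (snd z)) * (ennreal \<bar>fst (snd z)\<bar> * (\<integral>\<^sup>+e. slice_conv (enn_abs f) (enn_abs g) (fst z) (fst (snd z)) e (snd (snd z) - e) \<partial>lborel)\<^sup>2))"
  have h_eq: "h n z = indicator {- real n..real n} (snd (snd z)) * (ennreal \<bar>fst (snd z)\<bar> * (bilx_abs_integral f g z)\<^sup>2)" for n z
    unfolding h_def by (subst bilx_abs_integral_eq_slice_conv) simp_all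
  have "AE z in lborel3. h n z \<noteq> \<infinity>" for n
  proof (rule nn_integral_noteq_infinite)
    show "h n \<in> borel_measurable lborel3" unfolding h_def by measurable
    have em: "emeasure lborel {- real n..real n} \<le> ennreal (2 * real n)" by simp
    have "integral\<^sup>N lborel3 (h n) \<le> resonance_constant (2 * b) * ennreal (2 * real n) * (weighted_norm_sq b (enn_abs f) * weighted_norm_sq b (enn_abs g))"
      unfolding h_def using localized_output_le[OF borel_measurable_enn_abs[OF assms(1)] borel_measurable_enn_abs[OF assms(2)] _ b em] by simp
    also have "\<dots> < \<infinity>" using fin by (simp add: ennreal_mult_less_top)
    finally show "integral\<^sup>N lborel3 (h n) \<noteq> \<infinity>" by simp
  qed
  then have "AE z in lborel3. \<forall>n. h n z \<noteq> \<infinity>" by (simp add: AE_all_countable)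
  then show ?thesis using AE_xi_nonzero
  proof eventually_elim
    case (elim z)
    define n where "n = nat \<lceil>\<bar>snd (snd z)\<bar>\<rceil>"
    have "\<bar>snd (snd z)\<bar> \<le> real n" unfolding n_def by (rule real_nat_ceiling_ge)
    then have "snd (snd z) \<in> {- real n..real n}" by (auto simp: abs_le_iff)
    then have "ennreal \<bar>fst (snd z)\<bar> * (bilx_abs_integral f g z)\<^sup>2 \<noteq> \<infinity>" using elim(1) h_eq[of n z] by auto
    then have "(bilx_abs_integral f g z)\<^sup>2 \<noteq> \<infinity>" using elim(2) by (auto simp: ennreal_mult_eq_top_iff)
    then show ?case by (simp add: power_eq_top_ennreal top.not_eq_extremum)
  qed
qed

lemma l2sq_bilx_hat_Py_left_le:
  assumes [measurable]: "f \<in> borel_measurable lborel3" "g \<in> borel_measurable lborel3" "I \<in> sets borel"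
    and b: "b \<ge> 0" and L: "emeasure lborel I \<le> L"
  shows "l2sq (bilx_hat (Py_hat I f) g) \<le> resonance_constant (2 * b) * L * (Xsb_sq 0 b f * Xsb_sq 0 b g)"
proof -
  have "l2sq (bilx_hat (Py_hat I f) g) \<le> (\<integral>\<^sup>+z. ennreal \<bar>fst (snd z)\<bar> * (bilx_abs_integral (Py_hat I f) g z)\<^sup>2 \<partial>lborel3)"
    by (rule l2sq_bilx_hat_le)
  also have "\<dots> = (\<integral>\<^sup>+z. ennreal \<bar>fst (snd z)\<bar> * (\<integral>\<^sup>+e. indicator I e * slice_conv (enn_abs f) (enn_abs g) (fst z) (fst (snd z)) e (snd (snd z) - e) \<partial>lborel)\<^sup>2 \<partial>lborel3)"
    by (subst bilx_abs_integral_eq_slice_conv) (simp_all add: enn_abs_Py_hat slice_conv_indicator_left)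
  also have "\<dots> \<le> resonance_constant (2 * b) * L * (weighted_norm_sq b (enn_abs f) * weighted_norm_sq b (enn_abs g))"
  proof (rule localized_input_le[where ch="\<lambda>_ e. indicator I e", OF _ _ _ b])
    show "(\<integral>\<^sup>+e. (indicator I e)\<^sup>2 \<partial>lborel) \<le> L" for \<eta> :: real
      using L by (simp add: indicator_power2_ennreal)
  qed measurable
  finally show ?thesis by (simp add: weighted_norm_sq_eq_Xsb_sq)
qed

lemma l2sq_bilx_hat_Py_right_le:
  assumes [measurable]: "f \<in> borel_measurable lborel3" "g \<in> borel_measurable lborel3" "I \<in> sets borel"
    and b: "b \<ge> 0" and L: "emeasure lborel I \<le> L"
  shows "l2sq (bilx_hat f (Py_hat I g)) \<le> resonance_constant (2 * b) * L * (Xsb_sq 0 b f * Xsb_sq 0 b g)"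
proof -
  have "l2sq (bilx_hat f (Py_hat I g)) \<le> (\<integral>\<^sup>+z. ennreal \<bar>fst (snd z)\<bar> * (bilx_abs_integral f (Py_hat I g) z)\<^sup>2 \<partial>lborel3)"
    by (rule l2sq_bilx_hat_le)
  also have "\<dots> = (\<integral>\<^sup>+z. ennreal \<bar>fst (snd z)\<bar> * (\<integral>\<^sup>+e. indicator I (snd (snd z) - e) * slice_conv (enn_abs f) (enn_abs g) (fst z) (fst (snd z)) e (snd (snd z) - e) \<partial>lborel)\<^sup>2 \<partial>lborel3)"
    by (subst bilx_abs_integral_eq_slice_conv) (simp_all add: enn_abs_Py_hat slice_conv_indicator_right)
  also have "\<dots> \<le> resonance_constant (2 * b) * L * (weighted_norm_sq b (enn_abs f) * weighted_norm_sq b (enn_abs g))"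
  proof (rule localized_input_le[where ch="\<lambda>\<eta> e. indicator I (\<eta> - e)", OF _ _ _ b])
    show "(\<integral>\<^sup>+e. (indicator I (\<eta> - e))\<^sup>2 \<partial>lborel) \<le> L" for \<eta> :: real
      using L by (simp add: nn_integral_indicator_reflect)
  qed measurable
  finally show ?thesis by (simp add: weighted_norm_sq_eq_Xsb_sq)
qed

lemma l2sq_Py_bilx_hat_le:
  assumes [measurable]: "f \<in> borel_measurable lborel3" "g \<in> borel_measurable lborel3" "I \<in> sets borel"
    and b: "b \<ge> 0" and L: "emeasure lborel I \<le> L"
  shows "l2sq (Py_hat I (bilx_hat f g)) \<le> resonance_constant (2 * b) * L * (Xsb_sq 0 b f * Xsb_sq 0 b g)"
proof -
  have "l2sq (Py_hat I (bilx_hat f g)) = (\<integral>\<^sup>+z. indicator I (snd (snd z)) * ennreal ((cmod (bilx_hat f g z))\<^sup>2) \<partial>lborel3)"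
    unfolding l2sq_def lborel_eq_lborel3
    by (intro nn_integral_cong) (auto simp: Py_hat_def indicator_def split: prod.splits)
  also have "\<dots> \<le> (\<integral>\<^sup>+z. indicator I (snd (snd z)) * (ennreal \<bar>fst (snd z)\<bar> * (bilx_abs_integral f g z)\<^sup>2) \<partial>lborel3)"
    by (intro nn_integral_mono mult_left_mono cmod_bilx_hat_power2_le) simp
  also have "\<dots> = (\<integral>\<^sup>+z. indicator I (snd (snd z)) * (ennreal \<bar>fst (snd z)\<bar> * (\<integral>\<^sup>+e. slice_conv (enn_abs f) (enn_abs g) (fst z) (fst (snd z)) e (snd (snd z) - e) \<partial>lborel)\<^sup>2) \<partial>lborel3)"
    by (subst bilx_abs_integral_eq_slice_conv) simp_all
  also have "\<dots> \<le> resonance_constant (2 * b) * L * (weighted_norm_sq b (enn_abs f) * weighted_norm_sq b (enn_abs g))"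
    by (rule localized_output_le[OF _ _ _ b L]) measurable
  finally show ?thesis by (simp add: weighted_norm_sq_eq_Xsb_sq)
qed

section \<open>The estimate in \<open>x\<close>\<close>

definition bilx_localized_estimate ::
  "real \<Rightarrow> real \<Rightarrow> real set \<Rightarrow> real \<Rightarrow> (real \<times> real \<times> real \<Rightarrow> complex) \<Rightarrow> (real \<times> real \<times> real \<Rightarrow> complex) \<Rightarrow> bool" where
  "bilx_localized_estimate C b I L f g \<longleftrightarrow>
     bilx_defined (Py_hat I f) g \<and> bilx_defined f (Py_hat I g) \<and> bilx_defined f g \<and>
     l2sq (bilx_hat (Py_hat I f) g) < \<infinity> \<and> l2sq (bilx_hat f (Py_hat I g)) < \<infinity> \<and>
     l2sq (Py_hat I (bilx_hat f g)) < \<infinity> \<and>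
     l2norm (bilx_hat (Py_hat I f) g) + l2norm (bilx_hat f (Py_hat I g))
       + l2norm (Py_hat I (bilx_hat f g))
       \<le> C * sqrt L * Xsb_norm 0 b f * Xsb_norm 0 b g"

definition bily_localized_estimate ::
  "real \<Rightarrow> real \<Rightarrow> real set \<Rightarrow> real \<Rightarrow> (real \<times> real \<times> real \<Rightarrow> complex) \<Rightarrow> (real \<times> real \<times> real \<Rightarrow> complex) \<Rightarrow> bool" where
  "bily_localized_estimate C b I L f g \<longleftrightarrow>
     bily_defined (Px_hat I f) g \<and> bily_defined f (Px_hat I g) \<and> bily_defined f g \<and>
     l2sq (bily_hat (Px_hat I f) g) < \<infinity> \<and> l2sq (bily_hat f (Px_hat I g)) < \<infinity> \<and>
     l2sq (Px_hat I (bily_hat f g)) < \<infinity> \<and>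
     l2norm (bily_hat (Px_hat I f) g) + l2norm (bily_hat f (Px_hat I g))
       + l2norm (Px_hat I (bily_hat f g))
       \<le> C * sqrt L * Xsb_norm 0 b f * Xsb_norm 0 b g"

definition bilx_constant :: "real \<Rightarrow> real" where
  "bilx_constant b = 3 * sqrt (enn2real (resonance_constant (2 * b))) + 1"

lemma bilx_constant_pos: "bilx_constant b > 0"
  unfolding bilx_constant_def by (simp add: add_nonneg_pos)

lemma borel_measurable_if_in_Xsb:
  "in_Xsb s b f \<Longrightarrow> f \<in> borel_measurable lborel3"
  by (simp add: in_Xsb_def lborel_eq_lborel3)

lemma bilx_defined_localized:
  assumes b: "b > 1/2" and f: "in_Xsb 0 b f" and g: "in_Xsb 0 b g" and I[measurable]: "I \<in> sets borel"
  shows "bilx_defined (Py_hat I f) g \<and> bilx_defined f (Py_hat I g) \<and> bilx_defined f g"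
proof -
  have fm[measurable]: "f \<in> borel_measurable lborel3" and gm[measurable]: "g \<in> borel_measurable lborel3"
    using f g by (simp_all add: borel_measurable_if_in_Xsb)
  have "weighted_norm_sq b (enn_abs f) < \<infinity>" "weighted_norm_sq b (enn_abs g) < \<infinity>"
    using f g by (simp_all add: weighted_norm_sq_eq_Xsb_sq in_Xsb_def)
  moreover have "resonance_constant (2 * b) < \<infinity>"
    by (rule resonance_constant_finite) (use b in simp)
  ultimately have fin: "AE z in lborel3. bilx_abs_integral f g z < \<infinity>"
    using b by (intro AE_bilx_abs_integral_finite) simp_all
  have "AE z in lborel3. bilx_abs_integral (Py_hat I f) g z < \<infinity>"
    using fin by eventually_elim (rule le_less_trans[OF bilx_abs_integral_mono]; simp add: cmod_Py_hat_le)
  moreover have "AE z in lborel3. bilx_abs_integral f (Py_hat I g) z < \<infinity>"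
    using fin by eventually_elim (rule le_less_trans[OF bilx_abs_integral_mono]; simp add: cmod_Py_hat_le)
  ultimately show ?thesis
    using fin by (simp add: bilx_defined_if_AE_finite)
qed

lemma l2norm_le_Xsb_norm:
  assumes le: "l2sq X \<le> K * ennreal L * (Xsb_sq s b f * Xsb_sq s b g)"
    and K: "K < \<infinity>" and f: "in_Xsb s b f" and g: "in_Xsb s b g" and L: "L \<ge> 0"
  shows "l2sq X < \<infinity> \<and> l2norm X \<le> sqrt (enn2real K) * sqrt L * Xsb_norm s b f * Xsb_norm s b g"
proof
  have fin: "K * ennreal L * (Xsb_sq s b f * Xsb_sq s b g) < \<infinity>"
    using K f g by (simp add: in_Xsb_def ennreal_mult_less_top)
  with le show "l2sq X < \<infinity>" by (rule le_less_trans)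
  have "enn2real (l2sq X) \<le> enn2real (K * ennreal L * (Xsb_sq s b f * Xsb_sq s b g))"
    using le fin by (intro enn2real_mono) simp_all
  also have "\<dots> = enn2real K * L * (enn2real (Xsb_sq s b f) * enn2real (Xsb_sq s b g))"
    using L by (simp add: enn2real_mult)
  finally have "sqrt (enn2real (l2sq X)) \<le> sqrt (enn2real K * L * (enn2real (Xsb_sq s b f) * enn2real (Xsb_sq s b g)))"
    by (rule real_sqrt_le_mono)
  then show "l2norm X \<le> sqrt (enn2real K) * sqrt L * Xsb_norm s b f * Xsb_norm s b g"
    unfolding l2norm_def Xsb_norm_def by (simp add: real_sqrt_mult mult_ac)
qed

lemma bilx_localized_estimate:
  assumes b: "b > 1/2" and I: "bounded_interval I a c" and f: "in_Xsb 0 b f" and g: "in_Xsb 0 b g"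
  shows "bilx_localized_estimate (bilx_constant b) b I (c - a) f g"
proof -
  have fm: "f \<in> borel_measurable lborel3" and gm: "g \<in> borel_measurable lborel3"
    using f g by (simp_all add: borel_measurable_if_in_Xsb)
  have b0: "b \<ge> 0" using b by simp
  have I_sets: "I \<in> sets borel" and I_emeasure: "emeasure lborel I \<le> ennreal (c - a)"
    using I by (simp_all add: sets_borel_bounded_interval emeasure_bounded_interval_le)
  let ?K = "resonance_constant (2 * b)"
  let ?M = "sqrt (enn2real ?K) * sqrt (c - a) * Xsb_norm 0 b f * Xsb_norm 0 b g"
  have K: "?K < \<infinity>" by (rule resonance_constant_finite) (use b in simp)
  have ca: "c - a \<ge> 0" using bounded_interval_le[OF I] by simp
  have "l2sq (bilx_hat (Py_hat I f) g) < \<infinity> \<and> l2norm (bilx_hat (Py_hat I f) g) \<le> ?M"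
    by (rule l2norm_le_Xsb_norm[OF l2sq_bilx_hat_Py_left_le[OF fm gm I_sets b0 I_emeasure] K f g ca])
  moreover have "l2sq (bilx_hat f (Py_hat I g)) < \<infinity> \<and> l2norm (bilx_hat f (Py_hat I g)) \<le> ?M"
    by (rule l2norm_le_Xsb_norm[OF l2sq_bilx_hat_Py_right_le[OF fm gm I_sets b0 I_emeasure] K f g ca])
  moreover have "l2sq (Py_hat I (bilx_hat f g)) < \<infinity> \<and> l2norm (Py_hat I (bilx_hat f g)) \<le> ?M"
    by (rule l2norm_le_Xsb_norm[OF l2sq_Py_bilx_hat_le[OF fm gm I_sets b0 I_emeasure] K f g ca])
  moreover have "3 * ?M \<le> bilx_constant b * sqrt (c - a) * Xsb_norm 0 b f * Xsb_norm 0 b g"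
    using ca unfolding bilx_constant_def Xsb_norm_def by (simp add: algebra_simps)
  ultimately show ?thesis
    unfolding bilx_localized_estimate_def using bilx_defined_localized[OF b f g I_sets] by linarith
qed

section \<open>Exchanging \<open>\<xi>\<close> and \<open>\<eta>\<close>\<close>

definition swap_xi_eta :: "real \<times> real \<times> real \<Rightarrow> real \<times> real \<times> real" where
  "swap_xi_eta z = (fst z, snd (snd z), fst (snd z))"

lemma measurable_swap_xi_eta[measurable]: "swap_xi_eta \<in> lborel3 \<rightarrow>\<^sub>M lborel3"
  unfolding swap_xi_eta_def by measurable

lemma swap_xi_eta_involutive[simp]: "swap_xi_eta (swap_xi_eta z) = z"
  by (simp add: swap_xi_eta_def)

lemma swap_xi_eta_diff: "swap_xi_eta (z - z1) = swap_xi_eta z - swap_xi_eta z1"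
  by (simp add: swap_xi_eta_def triple_diff_eq)

lemma distr_swap_xi_eta: "distr lborel3 lborel3 swap_xi_eta = lborel3"
proof -
  have sw: "distr lborel2 lborel2 (\<lambda>(x, y). (y, x)) = lborel2"
    by (rule lborel_pair.distr_pair_swap[symmetric])
  have "distr lborel lborel (\<lambda>x. x) \<Otimes>\<^sub>M distr lborel2 lborel2 (\<lambda>(x, y). (y, x)) = distr (lborel \<Otimes>\<^sub>M lborel2) (lborel \<Otimes>\<^sub>M lborel2) (\<lambda>(x, y). (x, (\<lambda>(x, y). (y, x)) y))"
    by (rule pair_measure_distr) (measurable, simp add: sw sigma_finite_lborel2)
  moreover have "(\<lambda>(x, y). (x, (\<lambda>(x, y). (y, x)) y)) = swap_xi_eta"
    by (auto simp: fun_eq_iff swap_xi_eta_def)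
  ultimately show ?thesis using sw by (metis distr_id)
qed

lemma nn_integral_swap_xi_eta:
  assumes [measurable]: "h \<in> borel_measurable lborel3"
  shows "(\<integral>\<^sup>+z. h (swap_xi_eta z) \<partial>lborel3) = (\<integral>\<^sup>+z. h z \<partial>lborel3)"
  using nn_integral_distr[of swap_xi_eta lborel3 lborel3 h] by (simp add: distr_swap_xi_eta)

lemma integral_swap_xi_eta:
  fixes h :: "real \<times> real \<times> real \<Rightarrow> complex"
  assumes [measurable]: "h \<in> borel_measurable lborel3"
  shows "(\<integral>z. h (swap_xi_eta z) \<partial>lborel3) = (\<integral>z. h z \<partial>lborel3)"
  using integral_distr[of swap_xi_eta lborel3 lborel3 h] by (simp add: distr_swap_xi_eta)

lemma integrable_swap_xi_eta:
  fixes h :: "real \<times> real \<times> real \<Rightarrow> complex"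
  assumes [measurable]: "h \<in> borel_measurable lborel3"
  shows "integrable lborel3 (\<lambda>z. h (swap_xi_eta z)) \<longleftrightarrow> integrable lborel3 h"
  using integrable_distr_eq[of swap_xi_eta lborel3 lborel3 h] by (simp add: distr_swap_xi_eta)

lemma AE_swap_xi_eta:
  assumes "AE z in lborel3. P z"
  shows "AE z in lborel3. P (swap_xi_eta z)"
  by (rule AE_distrD[OF measurable_swap_xi_eta]) (subst distr_swap_xi_eta, rule assms)

lemma bily_integrand_swap:
  "bily_integrand f g z z1 = bilx_integrand (\<lambda>z. f (swap_xi_eta z)) (\<lambda>z. g (swap_xi_eta z)) (swap_xi_eta z) (swap_xi_eta z1)"
  unfolding bily_integrand_def bilx_integrand_def by (simp add: swap_xi_eta_diff[symmetric]) (simp add: swap_xi_eta_def)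

lemma bily_hat_swap:
  assumes [measurable]: "f \<in> borel_measurable lborel3" "g \<in> borel_measurable lborel3"
  shows "bily_hat f g z = bilx_hat (\<lambda>z. f (swap_xi_eta z)) (\<lambda>z. g (swap_xi_eta z)) (swap_xi_eta z)"
proof -
  have "(\<integral>z1. bily_integrand f g z z1 \<partial>lborel3) = (\<integral>z1. bilx_integrand (\<lambda>z. f (swap_xi_eta z)) (\<lambda>z. g (swap_xi_eta z)) (swap_xi_eta z) (swap_xi_eta z1) \<partial>lborel3)"
    by (simp add: bily_integrand_swap)
  also have "\<dots> = (\<integral>z1. bilx_integrand (\<lambda>z. f (swap_xi_eta z)) (\<lambda>z. g (swap_xi_eta z)) (swap_xi_eta z) z1 \<partial>lborel3)"
    by (rule integral_swap_xi_eta) measurable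
  finally show ?thesis unfolding bily_hat_def bilx_hat_def lborel_eq_lborel3 by (simp add: swap_xi_eta_def)
qed

lemma bily_defined_swap:
  assumes [measurable]: "f \<in> borel_measurable lborel3" "g \<in> borel_measurable lborel3"
    and "bilx_defined (\<lambda>z. f (swap_xi_eta z)) (\<lambda>z. g (swap_xi_eta z))"
  shows "bily_defined f g"
proof -
  have m1: "(\<lambda>z. f (swap_xi_eta z)) \<in> borel_measurable lborel3" and m2: "(\<lambda>z. g (swap_xi_eta z)) \<in> borel_measurable lborel3"
    by measurable
  have "AE z in lborel3. integrable lborel3 (bilx_integrand (\<lambda>z. f (swap_xi_eta z)) (\<lambda>z. g (swap_xi_eta z)) z)"
    using assms(3) unfolding bilx_defined_def lborel_eq_lborel3 .
  then have "AE z in lborel3. integrable lborel3 (bilx_integrand (\<lambda>z. f (swap_xi_eta z)) (\<lambda>z. g (swap_xi_eta z)) (swap_xi_eta z))"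
    by (rule AE_swap_xi_eta)
  then show ?thesis unfolding bily_defined_def lborel_eq_lborel3
  proof (rule eventually_mono)
    fix z assume "integrable lborel3 (bilx_integrand (\<lambda>z. f (swap_xi_eta z)) (\<lambda>z. g (swap_xi_eta z)) (swap_xi_eta z))"
    then have "integrable lborel3 (\<lambda>z1. bilx_integrand (\<lambda>z. f (swap_xi_eta z)) (\<lambda>z. g (swap_xi_eta z)) (swap_xi_eta z) (swap_xi_eta z1))"
      by (subst integrable_swap_xi_eta[OF borel_measurable_bilx_integrand[OF m1 m2]])
    then show "integrable lborel3 (bily_integrand f g z)"
      by (simp add: bily_integrand_swap[abs_def])
  qed
qed

lemma Px_hat_swap: "Px_hat I f = (\<lambda>z. Py_hat I (\<lambda>z. f (swap_xi_eta z)) (swap_xi_eta z))"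
  by (auto simp: fun_eq_iff Px_hat_def Py_hat_def swap_xi_eta_def split: prod.splits)

lemma Px_hat_swap_comp: "(\<lambda>z. Px_hat I f (swap_xi_eta z)) = Py_hat I (\<lambda>z. f (swap_xi_eta z))"
  by (auto simp: fun_eq_iff Px_hat_def Py_hat_def swap_xi_eta_def split: prod.splits)

lemma l2sq_swap:
  assumes [measurable]: "h \<in> borel_measurable lborel3"
  shows "l2sq (\<lambda>z. h (swap_xi_eta z)) = l2sq h"
  unfolding l2sq_def lborel_eq_lborel3 by (rule nn_integral_swap_xi_eta) measurable

lemma Xsb_weight_swap: "Xsb_weight s b (swap_xi_eta z) = Xsb_weight s b z"
  by (cases z) (simp add: Xsb_weight_def swap_xi_eta_def jb2_def algebra_simps)

lemma Xsb_sq_swap: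
  assumes [measurable]: "f \<in> borel_measurable lborel3"
  shows "Xsb_sq s b (\<lambda>z. f (swap_xi_eta z)) = Xsb_sq s b f"
proof -
  have [measurable]: "Xsb_weight s b \<in> borel_measurable lborel3"
    unfolding Xsb_weight_def[abs_def] jb_def jb2_def by (simp add: case_prod_beta) measurable
  have "Xsb_sq s b (\<lambda>z. f (swap_xi_eta z)) = (\<integral>\<^sup>+z. (\<lambda>z. ennreal ((Xsb_weight s b z * cmod (f z))\<^sup>2)) (swap_xi_eta z) \<partial>lborel3)"
    unfolding Xsb_sq_def lborel_eq_lborel3 by (simp add: Xsb_weight_swap)
  also have "\<dots> = Xsb_sq s b f"
    unfolding Xsb_sq_def lborel_eq_lborel3 by (rule nn_integral_swap_xi_eta) measurable
  finally show ?thesis .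
qed

lemma in_Xsb_swap:
  assumes "in_Xsb s b f"
  shows "in_Xsb s b (\<lambda>z. f (swap_xi_eta z))"
proof -
  have [measurable]: "f \<in> borel_measurable lborel3"
    using assms by (rule borel_measurable_if_in_Xsb)
  have "(\<lambda>z. f (swap_xi_eta z)) \<in> borel_measurable lborel3" by measurable
  then show ?thesis
    using assms unfolding in_Xsb_def lborel_eq_lborel3 by (simp add: Xsb_sq_swap)
qed

lemma bily_localized_estimate_if_swapped:
  assumes f: "in_Xsb 0 b f" and g: "in_Xsb 0 b g" and I[measurable]: "I \<in> sets borel"
    and est: "bilx_localized_estimate C b I L (\<lambda>z. f (swap_xi_eta z)) (\<lambda>z. g (swap_xi_eta z))"
  shows "bily_localized_estimate C b I L f g"
proof -
  have fm[measurable]: "f \<in> borel_measurable lborel3" and gm[measurable]: "g \<in> borel_measurable lborel3"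
    using f g by (simp_all add: borel_measurable_if_in_Xsb)
  define fS where "fS = (\<lambda>z. f (swap_xi_eta z))"
  define gS where "gS = (\<lambda>z. g (swap_xi_eta z))"
  have [measurable]: "fS \<in> borel_measurable lborel3" "gS \<in> borel_measurable lborel3"
    unfolding fS_def gS_def by measurable
  have Pxf[measurable]: "Px_hat I f \<in> borel_measurable lborel3" and Pxg[measurable]: "Px_hat I g \<in> borel_measurable lborel3"
    unfolding Px_hat_swap[of I f] Px_hat_swap[of I g] by measurable
  have swapped_Px: "(\<lambda>z. Px_hat I f (swap_xi_eta z)) = Py_hat I fS" "(\<lambda>z. Px_hat I g (swap_xi_eta z)) = Py_hat I gS"
    unfolding fS_def gS_def by (rule Px_hat_swap_comp)+
  have hat1: "bily_hat (Px_hat I f) g = (\<lambda>z. bilx_hat (Py_hat I fS) gS (swap_xi_eta z))"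
    using bily_hat_swap[OF Pxf gm] by (simp add: fun_eq_iff swapped_Px gS_def)
  have hat2: "bily_hat f (Px_hat I g) = (\<lambda>z. bilx_hat fS (Py_hat I gS) (swap_xi_eta z))"
    using bily_hat_swap[OF fm Pxg] by (simp add: fun_eq_iff swapped_Px fS_def)
  have hat3: "Px_hat I (bily_hat f g) = (\<lambda>z. Py_hat I (bilx_hat fS gS) (swap_xi_eta z))"
    using bily_hat_swap[OF fm gm] Px_hat_swap[of I "bily_hat f g"] by (simp add: fun_eq_iff fS_def gS_def)
  note est_defs = est[unfolded bilx_localized_estimate_def fS_def[symmetric] gS_def[symmetric]]
  have "bily_defined (Px_hat I f) g"
    by (rule bily_defined_swap[OF Pxf gm]) (use est_defs in \<open>simp add: swapped_Px gS_def\<close>)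
  moreover have "bily_defined f (Px_hat I g)"
    by (rule bily_defined_swap[OF fm Pxg]) (use est_defs in \<open>simp add: swapped_Px fS_def\<close>)
  moreover have "bily_defined f g"
    by (rule bily_defined_swap[OF fm gm]) (use est_defs in \<open>simp add: fS_def gS_def\<close>)
  moreover have "l2sq (bily_hat (Px_hat I f) g) = l2sq (bilx_hat (Py_hat I fS) gS)"
    "l2sq (bily_hat f (Px_hat I g)) = l2sq (bilx_hat fS (Py_hat I gS))"
    "l2sq (Px_hat I (bily_hat f g)) = l2sq (Py_hat I (bilx_hat fS gS))"
    unfolding hat1 hat2 hat3 by (subst l2sq_swap; measurable)+
  moreover have "Xsb_norm 0 b fS = Xsb_norm 0 b f" "Xsb_norm 0 b gS = Xsb_norm 0 b g"
    unfolding fS_def gS_def Xsb_norm_def by (simp_all add: Xsb_sq_swap)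
  ultimately show ?thesis
    using est_defs unfolding bily_localized_estimate_def l2norm_def by simp
qed

theorem mainTheorem5:
  fixes b :: real
  assumes "b > 1/2"
  shows "\<exists>C>0. \<forall>I a c f g. bounded_interval I a c \<and> in_Xsb 0 b f \<and> in_Xsb 0 b g \<longrightarrow>
     (bilx_defined (Py_hat I f) g \<and> bilx_defined f (Py_hat I g) \<and> bilx_defined f g \<and>
      l2sq (bilx_hat (Py_hat I f) g) < \<infinity> \<and> l2sq (bilx_hat f (Py_hat I g)) < \<infinity> \<and>
      l2sq (Py_hat I (bilx_hat f g)) < \<infinity> \<and>
      l2norm (bilx_hat (Py_hat I f) g) + l2norm (bilx_hat f (Py_hat I g))
        + l2norm (Py_hat I (bilx_hat f g))
        \<le> C * sqrt (c - a) * Xsb_norm 0 b f * Xsb_norm 0 b g)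
   \<and> (bily_defined (Px_hat I f) g \<and> bily_defined f (Px_hat I g) \<and> bily_defined f g \<and>
      l2sq (bily_hat (Px_hat I f) g) < \<infinity> \<and> l2sq (bily_hat f (Px_hat I g)) < \<infinity> \<and>
      l2sq (Px_hat I (bily_hat f g)) < \<infinity> \<and>
      l2norm (bily_hat (Px_hat I f) g) + l2norm (bily_hat f (Px_hat I g))
        + l2norm (Px_hat I (bily_hat f g))
        \<le> C * sqrt (c - a) * Xsb_norm 0 b f * Xsb_norm 0 b g)"
proof -
  have "bilx_localized_estimate (bilx_constant b) b I (c - a) f g
      \<and> bily_localized_estimate (bilx_constant b) b I (c - a) f g"
    if I: "bounded_interval I a c" and f: "in_Xsb 0 b f" and g: "in_Xsb 0 b g" for I a c f g
  proof
    show "bilx_localized_estimate (bilx_constant b) b I (c - a) f g"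
      by (rule bilx_localized_estimate[OF assms I f g])
    show "bily_localized_estimate (bilx_constant b) b I (c - a) f g"
      using bilx_localized_estimate[OF assms I in_Xsb_swap[OF f] in_Xsb_swap[OF g]]
      by (rule bily_localized_estimate_if_swapped[OF f g sets_borel_bounded_interval[OF I]])
  qed
  then show ?thesis
    using bilx_constant_pos[of b] unfolding bilx_localized_estimate_def bily_localized_estimate_def by blast
qed

end
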